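(* A nonnegative matrix $M\in\mathbb{R}_+^{p\times q}$ with $\operatorname{rank}(M)\ge 2$ is a slack matrix of some polytope if and only if $M_{\mathrm{inc}}$ is an incidence matrix of some $(\operatorname{rank}(M)-1)$-dimensional polytope and the all-ones vector $\mathbb{1}\in\mathbb{R}^p$ is contained in the column span of $M$.
   Context: For a polytope $P\subseteq\mathbb{R}^n$ with $\dim(P)\ge 1$, a slack matrix of $P$ is any matrix $S=[\mathbb{1},V]\cdot[w,-W]^T\in\mathbb{R}^{p\times q}$ (so $S_{ij}=w_j-W_jv_i$, with $v_i$ the $i$th row of $V$ and $W_j$ the $j$th row of $W$), where $V\in\mathbb{R}^{p\times n}$ satisfies $P=\operatorname{conv}(\text{rows of }V)$ and $W\in\mathbb{R}^{q\times n}$, $w\in\mathbb{R}^q$ satisfy $P=\{x\in\mathbb{R}^n: Wx\le w\}$. For a matrix $M$, $M_{\mathrm{inc}}$ is the $0/1$-matrix with $(M_{\mathrm{inc}})_{ij}=1$ iff $M_{ij}=0$. An incidence matrix of a polytope $P$ is a matrix $S_{\mathrm{inc}}$ for some slack matrix $S$ of $P$. *)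

theory Defs
  imports "HOL-Analysis.Analysis"
begin

text \<open>Points of R^n are represented as functions nat => real that vanish at
  all coordinates k >= n.  Matrices whose row/column counts are the fixed
  sizes p, q of the statement are represented as real^'q^'p (rows indexed by
  the finite type 'p, columns by 'q).  A point configuration V in R^(p x n) is
  a function 'p => nat => real (only coordinates k < n are used), an
  inequality system W x <= w with q rows is W :: 'q => nat => real together
  with w :: 'q => real.\<close>

definition Rn :: "nat \<Rightarrow> (nat \<Rightarrow> real) set" where
  "Rn n = {x. \<forall>k\<ge>n. x k = 0}"

definition conv_rows :: "nat \<Rightarrow> ('p::finite \<Rightarrow> nat \<Rightarrow> real) \<Rightarrow> (nat \<Rightarrow> real) set" where
  "conv_rows n V = {x \<in> Rn n. \<exists>l :: 'p \<Rightarrow> real. (\<forall>i. l i \<ge> 0) \<and> (\<Sum>i\<in>UNIV. l i) = 1 \<and>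
       (\<forall>k<n. x k = (\<Sum>i\<in>UNIV. l i * V i k))}"

definition ineq_set :: "nat \<Rightarrow> ('q::finite \<Rightarrow> nat \<Rightarrow> real) \<Rightarrow> ('q \<Rightarrow> real) \<Rightarrow> (nat \<Rightarrow> real) set" where
  "ineq_set n W w = {x \<in> Rn n. \<forall>j. (\<Sum>k<n. W j k * x k) \<le> w j}"

definition aff_indep_pts :: "nat \<Rightarrow> nat \<Rightarrow> (nat \<Rightarrow> nat \<Rightarrow> real) \<Rightarrow> bool" where
  "aff_indep_pts n d y \<longleftrightarrow> (\<forall>c :: nat \<Rightarrow> real.
      (\<forall>k<n. (\<Sum>i\<in>{1..d}. c i * (y i k - y 0 k)) = 0) \<longrightarrow> (\<forall>i\<in>{1..d}. c i = 0))"

definition set_dim :: "nat \<Rightarrow> (nat \<Rightarrow> real) set \<Rightarrow> nat" where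
  "set_dim n P = (GREATEST d. \<exists>y. (\<forall>i\<le>d. y i \<in> P) \<and> aff_indep_pts n d y)"

definition slack_matrix_of :: "nat \<Rightarrow> (nat \<Rightarrow> real) set \<Rightarrow> real^'q^'p \<Rightarrow> bool" where
  "slack_matrix_of n P S \<longleftrightarrow> set_dim n P \<ge> 1 \<and>
     (\<exists>(V :: 'p \<Rightarrow> nat \<Rightarrow> real) (W :: 'q \<Rightarrow> nat \<Rightarrow> real) (w :: 'q \<Rightarrow> real).
        P = conv_rows n V \<and> P = ineq_set n W w \<and>
        (\<forall>i j. S $ i $ j = w j - (\<Sum>k<n. W j k * V i k)))"

definition is_slack_matrix :: "real^'q^'p \<Rightarrow> bool" where
  "is_slack_matrix S \<longleftrightarrow> (\<exists>n P. slack_matrix_of n P S)"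

definition inc_mat :: "real^'q^'p \<Rightarrow> real^'q^'p" where
  "inc_mat M = (\<chi> i j. if M $ i $ j = 0 then 1 else 0)"

definition is_incidence_matrix_dim :: "nat \<Rightarrow> real^'q^'p \<Rightarrow> bool" where
  "is_incidence_matrix_dim d N \<longleftrightarrow>
     (\<exists>n P (S :: real^'q^'p). slack_matrix_of n P S \<and> set_dim n P = d \<and> N = inc_mat S)"

end

theory Submission
  imports Defs
begin

text \<open>Slack matrices of a polytope of dimension d are nonnegative, their rows affinely span a
  d-dimensional space avoiding 0 (so the all-ones vector lies in the column span, and the rank is
  d + 1), and the convex hull of the rows is the slice of their affine hull by the nonnegative
  orthant. Conversely, any nonnegative matrix whose rows have these properties is a slack matrix of
  the polytope cut out by the orthant in affine coordinates of the row space.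

  The heart of the matter is that the orthant-slice property only depends on the zero pattern:
  if Y is a family whose convex hull is an orthant slice and X is a nonnegative family with the same
  zeros and no larger affine dimension, then the convex hull of X is an orthant slice too. This is
  shown by induction on the dimension. At a vertex Y u, projecting centrally from Y u onto the
  hyperplane where the coordinates vanishing at Y u sum to 1 yields the vertex figure, again an
  orthant slice with matching zeros one dimension lower; the induction hypothesis for the figures
  at all vertices shows that the vertices of Y index points of X whose convex hull already contains
  the whole slice.\<close>

section \<open>Affine and convex hulls of indexed families\<close>

lemma sum_scaleR_fibre_weights:
  fixes f :: "'i \<Rightarrow> 'a" and h :: "'a \<Rightarrow> 'b::real_vector"
  assumes "finite I" and l: "\<And>i. i \<in> I \<Longrightarrow> l i = u (f i) / card {k\<in>I. f k = f i}"
  shows "(\<Sum>i\<in>I. l i *\<^sub>R h (f i)) = (\<Sum>x\<in>f`I. u x *\<^sub>R h x)"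
proof -
  have "(\<Sum>k\<in>{k\<in>I. f k = x}. l k *\<^sub>R h (f k)) = u x *\<^sub>R h x" if "x \<in> f`I" for x
  proof -
    have "(\<Sum>k\<in>{k\<in>I. f k = x}. l k *\<^sub>R h (f k))
        = (\<Sum>k\<in>{k\<in>I. f k = x}. (u x / card {k\<in>I. f k = x}) *\<^sub>R h x)"
      by (rule sum.cong) (auto simp: l)
    also have "\<dots> = u x *\<^sub>R h x"
      using that assms(1) by (auto simp: scaleR_sum_left[symmetric])
    finally show ?thesis .
  qed
  then show ?thesis
    unfolding sum.image_gen[OF assms(1), of "\<lambda>i. l i *\<^sub>R h (f i)" f]
    by (rule sum.cong[OF refl])
qed

lemma sum_scaleR_collapse_fibres:
  fixes h :: "'a \<Rightarrow> 'b::real_vector"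
  assumes "finite I"
  shows "(\<Sum>i\<in>I. l i *\<^sub>R h (f i)) = (\<Sum>x\<in>f`I. sum l {k\<in>I. f k = x} *\<^sub>R h x)"
  unfolding sum.image_gen[OF assms, of "\<lambda>i. l i *\<^sub>R h (f i)" f]
proof (rule sum.cong[OF refl])
  fix x
  have "(\<Sum>i\<in>{k\<in>I. f k = x}. l i *\<^sub>R h (f i)) = (\<Sum>i\<in>{k\<in>I. f k = x}. l i *\<^sub>R h x)"
    by (rule sum.cong) auto
  also have "\<dots> = sum l {k\<in>I. f k = x} *\<^sub>R h x"
    by (rule scaleR_sum_left[symmetric])
  finally show "(\<Sum>i\<in>{k\<in>I. f k = x}. l i *\<^sub>R h (f i)) = sum l {k\<in>I. f k = x} *\<^sub>R h x" .
qed

lemma convex_hull_image_explicit: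
  fixes f :: "'i \<Rightarrow> 'a::real_vector"
  assumes "finite I"
  shows "convex hull (f`I) =
    {y. \<exists>l. (\<forall>i\<in>I. 0 \<le> l i) \<and> sum l I = 1 \<and> (\<Sum>i\<in>I. l i *\<^sub>R f i) = y}"
proof (intro set_eqI iffI)
  fix y assume "y \<in> convex hull (f`I)"
  then obtain u where u: "\<forall>x\<in>f`I. 0 \<le> u x" "sum u (f`I) = 1" "(\<Sum>x\<in>f`I. u x *\<^sub>R x) = y"
    using convex_hull_finite[of "f`I"] assms by auto
  define l where "l i = u (f i) / card {k\<in>I. f k = f i}" for i
  have "(\<Sum>i\<in>I. l i *\<^sub>R (1::real)) = (\<Sum>x\<in>f`I. u x *\<^sub>R 1)"
    by (rule sum_scaleR_fibre_weights[OF assms]) (simp add: l_def)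
  then have "sum l I = 1" using u(2) by simp
  moreover have "(\<Sum>i\<in>I. l i *\<^sub>R f i) = y"
    using sum_scaleR_fibre_weights[OF assms, of l u f id] u(3) by (simp add: l_def)
  moreover have "\<forall>i\<in>I. 0 \<le> l i" using u(1) by (simp add: l_def)
  ultimately show "y \<in> {y. \<exists>l. (\<forall>i\<in>I. 0 \<le> l i) \<and> sum l I = 1 \<and> (\<Sum>i\<in>I. l i *\<^sub>R f i) = y}"
    by blast
next
  fix y assume "y \<in> {y. \<exists>l. (\<forall>i\<in>I. 0 \<le> l i) \<and> sum l I = 1 \<and> (\<Sum>i\<in>I. l i *\<^sub>R f i) = y}"
  then obtain l where l: "\<forall>i\<in>I. 0 \<le> l i" "sum l I = 1" "(\<Sum>i\<in>I. l i *\<^sub>R f i) = y" by auto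
  show "y \<in> convex hull (f`I)"
    unfolding l(3)[symmetric]
    by (rule convex_sum[OF assms convex_convex_hull l(2)]) (use l(1) in \<open>auto intro: hull_inc\<close>)
qed

lemma affine_hull_image_explicit:
  fixes f :: "'i \<Rightarrow> 'a::real_vector"
  assumes "finite I"
  shows "affine hull (f`I) = {y. \<exists>l. sum l I = 1 \<and> (\<Sum>i\<in>I. l i *\<^sub>R f i) = y}"
proof (intro set_eqI iffI)
  fix y assume "y \<in> affine hull (f`I)"
  then obtain u where u: "sum u (f`I) = 1" "(\<Sum>x\<in>f`I. u x *\<^sub>R x) = y"
    using affine_hull_finite[of "f`I"] assms by auto
  define l where "l i = u (f i) / card {k\<in>I. f k = f i}" for i
  have "(\<Sum>i\<in>I. l i *\<^sub>R (1::real)) = (\<Sum>x\<in>f`I. u x *\<^sub>R 1)"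
    by (rule sum_scaleR_fibre_weights[OF assms]) (simp add: l_def)
  then have "sum l I = 1" using u(1) by simp
  moreover have "(\<Sum>i\<in>I. l i *\<^sub>R f i) = y"
    using sum_scaleR_fibre_weights[OF assms, of l u f id] u(2) by (simp add: l_def)
  ultimately show "y \<in> {y. \<exists>l. sum l I = 1 \<and> (\<Sum>i\<in>I. l i *\<^sub>R f i) = y}"
    by blast
next
  fix y assume "y \<in> {y. \<exists>l. sum l I = 1 \<and> (\<Sum>i\<in>I. l i *\<^sub>R f i) = y}"
  then obtain l where l: "sum l I = 1" "(\<Sum>i\<in>I. l i *\<^sub>R f i) = y" by auto
  have "(\<Sum>x\<in>f`I. sum l {k\<in>I. f k = x}) = 1"
    using sum_scaleR_collapse_fibres[OF assms, of l "\<lambda>_. 1::real" f] l(1) by simp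
  moreover have "(\<Sum>x\<in>f`I. sum l {k\<in>I. f k = x} *\<^sub>R x) = y"
    using sum_scaleR_collapse_fibres[OF assms, of l id f] l(2) by simp
  ultimately show "y \<in> affine hull (f`I)"
    using affine_hull_finite[of "f`I"] assms by auto
qed

lemma insert_image_case_option: "insert a (f`I) = case_option a f ` insert None (Some`I)"
  by (simp add: image_image)

lemma ex_option_fun: "(\<exists>L :: 'i option \<Rightarrow> 'b. P L) \<longleftrightarrow> (\<exists>c l. P (case_option c l))"
proof -
  have "L = case_option (L None) (\<lambda>i. L (Some i))" for L :: "'i option \<Rightarrow> 'b"
    by (simp add: fun_eq_iff split: option.split)
  then show ?thesis by metis
qed

lemma convex_hull_insert_image_explicit:
  fixes f :: "'i \<Rightarrow> 'a::real_vector"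
  assumes "finite I"
  shows "convex hull (insert a (f`I)) = {y. \<exists>c l. 0 \<le> c \<and> (\<forall>i\<in>I. 0 \<le> l i) \<and>
    c + sum l I = 1 \<and> c *\<^sub>R a + (\<Sum>i\<in>I. l i *\<^sub>R f i) = y}"
  using convex_hull_image_explicit[of "insert None (Some`I)" "case_option a f"] assms
  unfolding insert_image_case_option[symmetric]
  by (simp add: ex_option_fun sum.reindex)

lemma affine_hull_insert_image_explicit:
  fixes f :: "'i \<Rightarrow> 'a::real_vector"
  assumes "finite I"
  shows "affine hull (insert a (f`I)) =
    {y. \<exists>c l. c + sum l I = 1 \<and> c *\<^sub>R a + (\<Sum>i\<in>I. l i *\<^sub>R f i) = y}"
  using affine_hull_image_explicit[of "insert None (Some`I)" "case_option a f"] assms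
  unfolding insert_image_case_option[symmetric]
  by (simp add: ex_option_fun sum.reindex)

lemma inner_eq_on_affine_hull:
  assumes "\<forall>x\<in>S. e \<bullet> x = b" "y \<in> affine hull S"
  shows "e \<bullet> y = (b::real)"
proof -
  have "affine hull S \<subseteq> {x. e \<bullet> x = b}"
    by (rule hull_minimal) (use assms(1) in \<open>auto simp: affine_hyperplane\<close>)
  then show ?thesis using assms(2) by auto
qed

lemma inner_const_on_affine_if_bounded_below:
  fixes a :: "'a::real_inner"
  assumes A: "affine A" and b: "\<forall>x\<in>A. b < a \<bullet> x" and x: "x \<in> A" and y: "y \<in> A"
  shows "a \<bullet> x = a \<bullet> y"
proof (rule ccontr)
  assume ne: "a \<bullet> x \<noteq> a \<bullet> y"
  define t where "t = (b - a \<bullet> x - 1) / (a \<bullet> y - a \<bullet> x)"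
  have "(1 - t) *\<^sub>R x + t *\<^sub>R y \<in> A" by (rule mem_affine[OF A x y]) simp
  then have "b < a \<bullet> ((1 - t) *\<^sub>R x + t *\<^sub>R y)" using b by blast
  moreover have "a \<bullet> ((1 - t) *\<^sub>R x + t *\<^sub>R y) = a \<bullet> x + t * (a \<bullet> y - a \<bullet> x)"
    by (simp add: inner_add_right algebra_simps)
  moreover have "t * (a \<bullet> y - a \<bullet> x) = b - a \<bullet> x - 1" using ne by (simp add: t_def)
  ultimately show False by simp
qed

lemma independent_enumeration:
  fixes B :: "'a::euclidean_space set"
  assumes "independent B" "finite J" "card J = card B"
  obtains v where "bij_betw v J B" "\<And>c. (\<Sum>i\<in>J. c i *\<^sub>R v i) = 0 \<Longrightarrow> \<forall>i\<in>J. c i = 0"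
proof -
  have finB: "finite B" using assms(1) by (rule finiteI_independent)
  obtain v where v: "bij_betw v J B" using finite_same_card_bij[OF assms(2) finB assms(3)] by blast
  then have img: "v ` J = B" and inj: "inj_on v J" by (auto simp: bij_betw_def)
  show ?thesis
  proof (rule that[OF v])
    fix c assume c: "(\<Sum>i\<in>J. c i *\<^sub>R v i) = 0"
    define u where "u x = c (the_inv_into J v x)" for x
    have uv: "u (v i) = c i" if "i \<in> J" for i
      using the_inv_into_f_f[OF inj that] by (simp add: u_def)
    have "(\<Sum>x\<in>B. u x *\<^sub>R x) = (\<Sum>i\<in>J. c i *\<^sub>R v i)"
      unfolding img[symmetric] sum.reindex[OF inj] by (rule sum.cong) (auto simp: uv)
    then have "\<forall>x\<in>B. u x = 0" using c real_vector.dependent_finite[OF finB] assms(1) by auto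
    then show "\<forall>i\<in>J. c i = 0" using uv img by force
  qed
qed

lemma independent_family:
  fixes v :: "'i \<Rightarrow> 'a::real_vector"
  assumes fin: "finite J" and ind: "\<And>c. (\<Sum>i\<in>J. c i *\<^sub>R v i) = 0 \<Longrightarrow> \<forall>i\<in>J. c i = 0"
  shows "inj_on v J" "independent (v`J)"
proof -
  show inj: "inj_on v J"
  proof (rule inj_onI, rule ccontr)
    fix i j assume ij: "i \<in> J" "j \<in> J" "v i = v j" "i \<noteq> j"
    define c where "c k = (if k = i then 1 else if k = j then -1 else (0::real))" for k
    have "(\<Sum>k\<in>J. c k *\<^sub>R v k) = (\<Sum>k\<in>{i,j}. c k *\<^sub>R v k)"
      by (rule sum.mono_neutral_right) (use fin ij in \<open>auto simp: c_def\<close>)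
    also have "\<dots> = 0" using ij by (simp add: c_def)
    finally have "c i = 0" using ind ij(1) by blast
    then show False by (simp add: c_def)
  qed
  show "independent (v`J)"
  proof
    assume "dependent (v`J)"
    then obtain u where u: "\<exists>x\<in>v`J. u x \<noteq> 0" "(\<Sum>x\<in>v`J. u x *\<^sub>R x) = 0"
      using real_vector.dependent_finite[of "v`J"] fin by auto
    have "(\<Sum>i\<in>J. u (v i) *\<^sub>R v i) = 0" using u(2) by (simp add: sum.reindex[OF inj])
    then have "\<forall>i\<in>J. u (v i) = 0" by (rule ind)
    then show False using u(1) by auto
  qed
qed

lemma affine_hull_coordinates:
  fixes S :: "'a::euclidean_space set"
  assumes "b0 \<in> S"
  obtains D v where "aff_dim S = int D"
    and "affine hull S = range (\<lambda>x. b0 + (\<Sum>k<D. x k *\<^sub>R v k))"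
    and "\<And>c. (\<Sum>k<D. c k *\<^sub>R v k) = 0 \<Longrightarrow> \<forall>k<D. c k = 0"
proof -
  define Sp where "Sp = span ((\<lambda>x. - b0 + x) ` S)"
  obtain B where B: "B \<subseteq> Sp" "independent B" "Sp \<subseteq> span B" "card B = dim Sp"
    using basis_exists[of Sp] by blast
  have span_B: "span B = Sp" using B(1,3) by (simp add: Sp_def span_minimal subset_antisym)
  define D where "D = card B"
  obtain v where v: "bij_betw v {..<D} B"
      "\<And>c. (\<Sum>i\<in>{..<D}. c i *\<^sub>R v i) = 0 \<Longrightarrow> \<forall>i\<in>{..<D}. c i = 0"
    using independent_enumeration[OF B(2), of "{..<D}"] by (auto simp: D_def)
  have v_image: "v ` {..<D} = B" and v_inj: "inj_on v {..<D}"
    using v(1) by (auto simp: bij_betw_def)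
  have "aff_dim S = int (dim ((+) (- b0) ` S))" by (rule aff_dim_eq_dim[OF hull_inc[OF assms]])
  then have "aff_dim S = int D" using B(4) by (simp add: D_def Sp_def dim_span)
  moreover have "Sp = range (\<lambda>x. \<Sum>k<D. x k *\<^sub>R v k)"
  proof -
    have "Sp = range (\<lambda>u. \<Sum>z\<in>v`{..<D}. u z *\<^sub>R z)"
      using span_finite[OF finiteI_independent[OF B(2)]] span_B v_image by simp
    also have "\<dots> = range (\<lambda>u. \<Sum>k<D. u (v k) *\<^sub>R v k)"
      by (simp add: sum.reindex[OF v_inj])
    also have "\<dots> = range (\<lambda>x. \<Sum>k<D. x k *\<^sub>R v k)"
    proof (intro equalityI subsetI)
      fix y assume "y \<in> range (\<lambda>u. \<Sum>k<D. u (v k) *\<^sub>R v k)"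
      then obtain u where "y = (\<Sum>k<D. u (v k) *\<^sub>R v k)" by blast
      then show "y \<in> range (\<lambda>x. \<Sum>k<D. x k *\<^sub>R v k)" by (intro image_eqI[where x="\<lambda>k. u (v k)"]) auto
    next
      fix y assume "y \<in> range (\<lambda>x. \<Sum>k<D. x k *\<^sub>R v k)"
      then obtain x where y: "y = (\<Sum>k<D. x k *\<^sub>R v k)" by blast
      have "y = (\<Sum>k<D. x (the_inv_into {..<D} v (v k)) *\<^sub>R v k)"
        unfolding y by (rule sum.cong) (simp_all add: the_inv_into_f_f[OF v_inj])
      then show "y \<in> range (\<lambda>u. \<Sum>k<D. u (v k) *\<^sub>R v k)"
        by (intro image_eqI[where x="\<lambda>z. x (the_inv_into {..<D} v z)"]) auto
    qed
    finally show ?thesis .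
  qed
  then have "affine hull S = range (\<lambda>x. b0 + (\<Sum>k<D. x k *\<^sub>R v k))"
    using affine_hull_insert_span_gen[of b0 S] assms by (auto simp: Sp_def insert_absorb)
  ultimately show ?thesis using that v(2) by blast
qed

section \<open>Polytopes and central projection\<close>

lemma bounded_line_direction_zero:
  fixes S :: "'a::real_normed_vector set"
  assumes "bounded S" "\<And>s. q + s *\<^sub>R d \<in> S"
  shows "d = 0"
proof (rule ccontr)
  assume d: "d \<noteq> 0"
  obtain B where B: "\<And>x. x \<in> S \<Longrightarrow> norm x \<le> B" using assms(1) unfolding bounded_iff by blast
  define s where "s = (B + norm q + 1) / norm d"
  have "norm q \<le> B" using B[OF assms(2)[of 0]] by simp
  then have "0 \<le> B" using norm_ge_zero[of q] by linarith
  then have "norm (s *\<^sub>R d) = B + norm q + 1"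
    using d by (simp add: s_def)
  moreover have "norm (s *\<^sub>R d) \<le> norm (q + s *\<^sub>R d) + norm q"
    by (metis add_diff_cancel_left' norm_triangle_ineq4)
  ultimately show False using B[OF assms(2)[of s]] by linarith
qed

lemma exists_small_step_nonneg:
  fixes a b :: "'j \<Rightarrow> real"
  assumes "finite K" "\<forall>j\<in>K. 0 < a j"
  shows "\<exists>t>0. \<forall>j\<in>K. 0 \<le> a j + t * b j"
proof -
  have "\<forall>\<^sub>F t in at_right 0. 0 < a j + t * b j" if "j \<in> K" for j
  proof (rule order_tendstoD(1))
    show "((\<lambda>t. a j + t * b j) \<longlongrightarrow> a j) (at_right 0)"
      by (auto intro!: tendsto_eq_intros)
  qed (use assms(2) that in auto)
  then have "\<forall>\<^sub>F t in at_right 0. t > 0 \<and> (\<forall>j\<in>K. 0 < a j + t * b j)"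
    using assms(1) by (auto simp: eventually_ball_finite_distrib eventually_at_right_less intro: eventually_conj)
  then obtain t where "t > 0" "\<forall>j\<in>K. 0 < a j + t * b j"
    using eventually_happens'[OF trivial_limit_at_right_real] by blast
  then show ?thesis by (auto intro: less_imp_le)
qed

lemma extreme_point_maximizing_on_face:
  fixes e :: "'a::real_inner"
  assumes F: "F face_of K" "compact F" "y0 \<in> F"
    and unique: "\<And>y y'. y \<in> F \<Longrightarrow> y' \<in> F \<Longrightarrow> e \<bullet> y = e \<bullet> y' \<Longrightarrow>
      e \<bullet> y0 \<le> e \<bullet> y \<Longrightarrow> y = y'"
  obtains z where "z extreme_point_of K" "z \<in> F" "e \<bullet> y0 \<le> e \<bullet> z"
proof -
  obtain z where z: "z \<in> F" "\<forall>y\<in>F. e \<bullet> y \<le> e \<bullet> z"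
    using continuous_attains_sup[OF F(2) _ continuous_on_inner[OF continuous_on_const continuous_on_id]]
      F(3) by blast
  define F' where "F' = F \<inter> {y. e \<bullet> y = e \<bullet> z}"
  have "F' face_of F" unfolding F'_def
    by (rule face_of_Int_supporting_hyperplane_le[OF face_of_imp_convex[OF F(1)]]) (use z in auto)
  then have "F' face_of K" using F(1) face_of_trans by blast
  moreover have "F' = {z}"
  proof
    show "F' \<subseteq> {z}"
    proof
      fix y assume "y \<in> F'"
      then have "y \<in> F" "e \<bullet> y = e \<bullet> z" by (auto simp: F'_def)
      moreover have "e \<bullet> y0 \<le> e \<bullet> z" using z(2) F(3) by blast
      ultimately show "y \<in> {z}" using unique[of y z] z(1) by simp
    qed
  qed (use z(1) in \<open>simp add: F'_def\<close>)
  ultimately have "z extreme_point_of K" by (simp add: face_of_singleton)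
  then show ?thesis using that z F(3) by blast
qed

definition vertex_indices :: "'p set \<Rightarrow> ('p \<Rightarrow> 'a::real_vector) \<Rightarrow> 'p set" where
  "vertex_indices I Y = {i\<in>I. Y i extreme_point_of convex hull (Y`I)}"

lemma vertex_indices_nonempty:
  fixes Y :: "'p \<Rightarrow> 'a::euclidean_space"
  assumes "finite I" "I \<noteq> {}"
  shows "vertex_indices I Y \<noteq> {}"
proof -
  have "convex hull (Y`I) = convex hull {x. x extreme_point_of convex hull (Y`I)}"
    using assms(1) by (intro Krein_Milman_Minkowski) (simp_all add: compact_convex_hull finite_imp_compact)
  then obtain z where z: "z extreme_point_of convex hull (Y`I)"
    using assms(2) by fastforce
  then obtain i where "i \<in> I" "z = Y i" using extreme_point_of_convex_hull by blast
  then show ?thesis using z by (auto simp: vertex_indices_def)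
qed

lemma subset_convex_hull_if_minimizers:
  fixes x :: "'p \<Rightarrow> 'a::euclidean_space"
  assumes "finite V" "V \<noteq> {}"
    and min: "\<And>g u y. u \<in> V \<Longrightarrow> \<forall>u'\<in>V. g \<bullet> x u \<le> g \<bullet> x u' \<Longrightarrow> y \<in> P \<Longrightarrow>
      g \<bullet> x u \<le> g \<bullet> y"
  shows "P \<subseteq> convex hull (x`V)"
proof
  fix y assume y: "y \<in> P"
  show "y \<in> convex hull (x`V)"
  proof (rule ccontr)
    assume "y \<notin> convex hull (x`V)"
    moreover have "closed (convex hull (x`V))"
      using assms(1) by (simp add: compact_imp_closed compact_convex_hull finite_imp_compact)
    ultimately obtain g b where gb: "g \<bullet> y < b" "\<forall>z\<in>convex hull (x`V). b < g \<bullet> z"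
      using separating_hyperplane_closed_point[OF convex_convex_hull] by blast
    obtain u where u: "u \<in> V" "\<forall>u'\<in>V. g \<bullet> x u \<le> g \<bullet> x u'"
      using ex_min_if_finite[of "(\<lambda>u. g \<bullet> x u) ` V"] assms(1,2) by fastforce
    have "b < g \<bullet> x u" using gb(2) u(1) by (simp add: hull_inc)
    then show False using min[OF u y] gb(1) by simp
  qed
qed

text \<open>For e \<bullet> a = 0 this is the projection from the apex a onto the hyperplane e \<bullet> x = 1.\<close>

definition central_projection :: "'a::real_inner \<Rightarrow> 'a \<Rightarrow> 'a \<Rightarrow> 'a" where
  "central_projection e a y = a + (1 / (e \<bullet> y)) *\<^sub>R (y - a)"

lemma inner_central_projection:
  "e \<bullet> a = 0 \<Longrightarrow> e \<bullet> y \<noteq> 0 \<Longrightarrow> e \<bullet> central_projection e a y = 1"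
  by (simp add: central_projection_def inner_add_right inner_diff_right)

lemma central_projection_inverse:
  "e \<bullet> y \<noteq> 0 \<Longrightarrow> y = a + (e \<bullet> y) *\<^sub>R (central_projection e a y - a)"
  by (simp add: central_projection_def)

lemma affine_hull_add_apex_direction:
  fixes f :: "'i \<Rightarrow> 'a::real_inner"
  assumes "finite I" "e \<bullet> a = 0" "\<forall>i\<in>I. e \<bullet> f i = 1"
    and "x \<in> affine hull (insert a (f`I))" "e \<bullet> x = 0" "q \<in> affine hull (f`I)"
  shows "q + (x - a) \<in> affine hull (f`I)"
proof -
  obtain c l where cl: "c + sum l I = 1" "x = c *\<^sub>R a + (\<Sum>i\<in>I. l i *\<^sub>R f i)"
    using assms(4) unfolding affine_hull_insert_image_explicit[OF assms(1)] by auto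
  obtain m where m: "sum m I = 1" "q = (\<Sum>i\<in>I. m i *\<^sub>R f i)"
    using assms(6) unfolding affine_hull_image_explicit[OF assms(1)] by auto
  have "e \<bullet> x = sum l I"
    using assms(2,3) by (simp add: cl(2) inner_sum_right inner_add_right)
  then have c1: "c = 1" using assms(5) cl(1) by simp
  have "q + (x - a) = (\<Sum>i\<in>I. (m i + l i) *\<^sub>R f i)"
    by (simp add: m(2) cl(2) c1 scaleR_add_left sum.distrib)
  moreover have "sum (\<lambda>i. m i + l i) I = 1" using m(1) cl(1) c1 by (simp add: sum.distrib)
  ultimately show ?thesis
    unfolding affine_hull_image_explicit[OF assms(1)]
    by (intro CollectI exI[where x="\<lambda>i. m i + l i"] conjI) auto
qed

lemma central_projection_in_affine_hull:
  fixes f :: "'i \<Rightarrow> 'a::real_inner"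
  assumes "finite I" "e \<bullet> a = 0" "\<forall>i\<in>I. e \<bullet> f i = 1"
    and "x \<in> affine hull (insert a (f`I))" "e \<bullet> x \<noteq> 0"
  shows "central_projection e a x \<in> affine hull (f`I)"
proof -
  obtain c l where cl: "c + sum l I = 1" "x = c *\<^sub>R a + (\<Sum>i\<in>I. l i *\<^sub>R f i)"
    using assms(4) unfolding affine_hull_insert_image_explicit[OF assms(1)] by auto
  define t where "t = e \<bullet> x"
  have st: "sum l I = t"
    using assms(2,3) by (simp add: t_def cl(2) inner_sum_right inner_add_right)
  have "x - a = (\<Sum>i\<in>I. l i *\<^sub>R f i) - t *\<^sub>R a"
    using cl st by (simp add: algebra_simps scaleR_add_left[symmetric])
  then have "central_projection e a x = (\<Sum>i\<in>I. (l i / t) *\<^sub>R f i)"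
    using assms(5) by (simp add: central_projection_def t_def[symmetric] scaleR_diff_right scaleR_sum_right)
  moreover have "sum (\<lambda>i. l i / t) I = 1"
    using st assms(5) by (simp add: t_def sum_divide_distrib[symmetric])
  ultimately show ?thesis
    unfolding affine_hull_image_explicit[OF assms(1)]
    by (intro CollectI exI[where x="\<lambda>i. l i / t"] conjI) auto
qed

lemma central_projection_in_convex_hull:
  fixes g :: "'i \<Rightarrow> 'a::real_inner"
  assumes "finite I" "e \<bullet> a = 0" "\<forall>i\<in>I. 0 < e \<bullet> g i"
    and "z \<in> convex hull (insert a (g`I))" "0 < e \<bullet> z"
  shows "central_projection e a z \<in> convex hull ((\<lambda>i. central_projection e a (g i))`I)"
proof -
  obtain c l where cl: "0 \<le> c" "\<forall>i\<in>I. 0 \<le> l i" "c + sum l I = 1"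
      "z = c *\<^sub>R a + (\<Sum>i\<in>I. l i *\<^sub>R g i)"
    using assms(4) unfolding convex_hull_insert_image_explicit[OF assms(1)] by auto
  define t where "t = e \<bullet> z"
  have st: "(\<Sum>i\<in>I. l i * (e \<bullet> g i)) = t"
    using assms(2) by (simp add: t_def cl(4) inner_sum_right inner_add_right)
  define mu where "mu i = l i * (e \<bullet> g i) / t" for i
  have mu0: "\<forall>i\<in>I. 0 \<le> mu i" using cl(2) assms(3,5) by (auto simp: mu_def t_def)
  have mu1: "sum mu I = 1" using st assms(5) by (simp add: mu_def t_def sum_divide_distrib[symmetric])
  have "(\<Sum>i\<in>I. mu i *\<^sub>R central_projection e a (g i))
      = (\<Sum>i\<in>I. mu i *\<^sub>R a) + (1/t) *\<^sub>R (\<Sum>i\<in>I. l i *\<^sub>R (g i - a))"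
    unfolding scaleR_sum_right sum.distrib[symmetric]
    by (rule sum.cong[OF refl]) (use assms(3) in \<open>auto simp: mu_def central_projection_def scaleR_add_right\<close>)
  also have "(\<Sum>i\<in>I. mu i *\<^sub>R a) = a"
    by (simp add: scaleR_sum_left[symmetric] mu1)
  also have "(\<Sum>i\<in>I. l i *\<^sub>R (g i - a)) = z - a"
    using cl(3,4) by (simp add: scaleR_diff_right sum_subtractf scaleR_sum_left[symmetric] algebra_simps
      scaleR_add_left[symmetric])
  finally have "central_projection e a z = (\<Sum>i\<in>I. mu i *\<^sub>R central_projection e a (g i))"
    by (simp add: central_projection_def t_def)
  then show ?thesis
    unfolding convex_hull_image_explicit[OF assms(1)] using mu0 mu1
    by (intro CollectI exI[where x=mu] conjI) auto
qed

section \<open>Orthant slices with a common zero pattern\<close>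

definition indicator_vec :: "'n set \<Rightarrow> real^'n" where
  "indicator_vec T = (\<chi> j. if j \<in> T then 1 else 0)"

lemma inner_indicator_vec: "indicator_vec T \<bullet> (x::real^'n::finite) = (\<Sum>j\<in>T. x$j)"
proof -
  have "indicator_vec T \<bullet> x = (\<Sum>j\<in>UNIV. (if j \<in> T then x$j else 0))"
    by (auto simp: indicator_vec_def inner_vec_def intro!: sum.cong)
  then show ?thesis by (simp add: sum.If_cases)
qed

lemma inner_indicator_vec_nonneg:
  "\<forall>j\<in>T. 0 \<le> (x::real^'n::finite)$j \<Longrightarrow> 0 \<le> indicator_vec T \<bullet> x"
  by (simp add: inner_indicator_vec sum_nonneg)

lemma inner_indicator_vec_eq_0_iff:
  "\<forall>j\<in>T. 0 \<le> (x::real^'n::finite)$j \<Longrightarrow> indicator_vec T \<bullet> x = 0 \<longleftrightarrow> (\<forall>j\<in>T. x$j = 0)"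
  by (simp add: inner_indicator_vec sum_nonneg_eq_0_iff)

definition orthant_slice :: "'q set \<Rightarrow> (real^'q) set \<Rightarrow> bool" where
  "orthant_slice C S \<longleftrightarrow> convex hull S = affine hull S \<inter> {y. \<forall>j\<in>C. 0 \<le> y $ j}"

lemma convex_nonneg_coordinates: "convex {y::real^'q. \<forall>j\<in>C. 0 \<le> y $ j}"
  unfolding convex_def by (auto intro!: add_nonneg_nonneg mult_nonneg_nonneg)

lemma convex_hull_subset_orthant_slice:
  fixes S :: "(real^'q) set"
  shows "\<forall>x\<in>S. \<forall>j\<in>C. 0 \<le> x $ j \<Longrightarrow> convex hull S \<subseteq> affine hull S \<inter> {y. \<forall>j\<in>C. 0 \<le> y $ j}"
  by (rule hull_minimal)
    (use convex_nonneg_coordinates in \<open>auto simp: hull_inc affine_imp_convex intro!: convex_Int\<close>)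

definition nonneg_same_zeros :: "'p set \<Rightarrow> 'q set \<Rightarrow> ('p \<Rightarrow> real^'q) \<Rightarrow> ('p \<Rightarrow> real^'q) \<Rightarrow> bool" where
  "nonneg_same_zeros I C X Y \<longleftrightarrow>
     (\<forall>i\<in>I. \<forall>j\<in>C. 0 \<le> X i $ j \<and> 0 \<le> Y i $ j \<and> (X i $ j = 0 \<longleftrightarrow> Y i $ j = 0))"

definition slice_transfer_hyps :: "'p set \<Rightarrow> 'q set \<Rightarrow> ('p \<Rightarrow> real^'q) \<Rightarrow> ('p \<Rightarrow> real^'q) \<Rightarrow> bool" where
  "slice_transfer_hyps I C X Y \<longleftrightarrow> I \<noteq> {} \<and> nonneg_same_zeros I C X Y \<and>
     aff_dim (X`I) \<le> aff_dim (Y`I) \<and> orthant_slice C (Y`I)"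

definition slice_transfer_concls :: "'p set \<Rightarrow> 'q set \<Rightarrow> ('p \<Rightarrow> real^'q) \<Rightarrow> ('p \<Rightarrow> real^'q) \<Rightarrow> bool" where
  "slice_transfer_concls I C X Y \<longleftrightarrow> orthant_slice C (X`I) \<and> aff_dim (X`I) = aff_dim (Y`I) \<and>
     convex hull (X`I) = convex hull (X ` vertex_indices I Y) \<and>
     (\<forall>u\<in>vertex_indices I Y. \<forall>x\<in>affine hull (X`I).
        (\<forall>j\<in>C. Y u $ j = 0 \<longrightarrow> x $ j = 0) \<longrightarrow> x = X u)"

locale vertex_figure =
  fixes I :: "'p::finite set" and C :: "'q::finite set" and X Y :: "'p \<Rightarrow> real^'q" and u :: 'p
  assumes hyps: "slice_transfer_hyps I C X Y"
    and vertex: "u \<in> vertex_indices I Y"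
    and aff_dim_Y_pos: "aff_dim (Y`I) \<ge> 1"
begin

text \<open>T indexes the facets through the vertex Y u, J the points other than Y u, and qX, qY are the
  vertex figures at X u and Y u: the other points projected from the vertex onto the hyperplane
  e \<bullet> x = 1.\<close>

definition T where "T = {j\<in>C. Y u $ j = 0}"

definition e where "e = indicator_vec T"

definition J where "J = {i\<in>I. e \<bullet> Y i \<noteq> 0}"

definition qX where "qX i = central_projection e (X u) (X i)"

definition qY where "qY i = central_projection e (Y u) (Y i)"

lemma u_in_I: "u \<in> I" and Yu_extreme: "Y u extreme_point_of convex hull (Y`I)"
  using vertex by (simp_all add: vertex_indices_def)

lemma X_nonneg: "i \<in> I \<Longrightarrow> j \<in> C \<Longrightarrow> 0 \<le> X i $ j"
  and Y_nonneg: "i \<in> I \<Longrightarrow> j \<in> C \<Longrightarrow> 0 \<le> Y i $ j"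
  and X_zero_iff_Y_zero: "i \<in> I \<Longrightarrow> j \<in> C \<Longrightarrow> X i $ j = 0 \<longleftrightarrow> Y i $ j = 0"
  using hyps by (simp_all add: slice_transfer_hyps_def nonneg_same_zeros_def)

lemma aff_dim_X_le: "aff_dim (X`I) \<le> aff_dim (Y`I)"
  and slice_Y: "convex hull (Y`I) = affine hull (Y`I) \<inter> {y. \<forall>j\<in>C. 0 \<le> y $ j}"
  using hyps by (simp_all add: slice_transfer_hyps_def orthant_slice_def)

lemma T_subset_C: "T \<subseteq> C" by (auto simp: T_def)

lemma Yu_zero_on_T: "j \<in> T \<Longrightarrow> Y u $ j = 0" by (simp add: T_def)

lemma Xu_zero_on_T: "j \<in> T \<Longrightarrow> X u $ j = 0" using X_zero_iff_Y_zero[OF u_in_I] by (simp add: T_def)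

lemma Yu_pos_off_T: "j \<in> C - T \<Longrightarrow> 0 < Y u $ j" using Y_nonneg[OF u_in_I] by (force simp: T_def)

lemma e_Yu: "e \<bullet> Y u = 0" by (simp add: e_def inner_indicator_vec Yu_zero_on_T)

lemma e_Xu: "e \<bullet> X u = 0" by (simp add: e_def inner_indicator_vec Xu_zero_on_T)

lemma convex_hull_Y_nonneg: "y \<in> convex hull (Y`I) \<Longrightarrow> j \<in> C \<Longrightarrow> 0 \<le> y $ j"
  using slice_Y by auto

lemma e_convex_hull_Y_nonneg: "y \<in> convex hull (Y`I) \<Longrightarrow> 0 \<le> e \<bullet> y"
  unfolding e_def by (rule inner_indicator_vec_nonneg) (use convex_hull_Y_nonneg T_subset_C in auto)

text \<open>Y u is the only point of the polytope on all facets through it: otherwise the segment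
  from a point y \<noteq> Y u through Y u could be prolonged beyond Y u inside the slice.\<close>

lemma convex_hull_Y_zero_on_T:
  assumes y: "y \<in> convex hull (Y`I)" and yT: "\<forall>j\<in>T. y $ j = 0"
  shows "y = Y u"
proof (rule ccontr)
  assume ne: "y \<noteq> Y u"
  obtain t where t: "t > 0" "\<forall>j\<in>C - T. 0 \<le> Y u $ j + t * (Y u - y) $ j"
    using exists_small_step_nonneg[of "C - T" "\<lambda>j. Y u $ j" "\<lambda>j. (Y u - y) $ j"] Yu_pos_off_T
    by auto
  define z where "z = (1 + t) *\<^sub>R Y u + (- t) *\<^sub>R y"
  have "Y u \<in> affine hull (Y`I)" using u_in_I by (simp add: hull_inc)
  moreover have "y \<in> affine hull (Y`I)" using y convex_hull_subset_affine_hull by blast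
  ultimately have "z \<in> affine hull (Y`I)" unfolding z_def
    by (intro mem_affine[OF affine_affine_hull]) simp_all
  moreover have "0 \<le> z $ j" if "j \<in> C" for j
    using Yu_zero_on_T yT t(2) that by (cases "j \<in> T") (simp_all add: z_def algebra_simps)
  ultimately have z: "z \<in> convex hull (Y`I)" using slice_Y by auto
  have "(1/(1+t)) *\<^sub>R z + (t/(1+t)) *\<^sub>R y = Y u"
    using t(1) unfolding z_def by (simp add: scaleR_add_right algebra_simps)
      (simp add: scaleR_add_left[symmetric] divide_simps)
  moreover have "1 - t/(1+t) = 1/(1+t)" using t(1) by (simp add: field_simps)
  ultimately have "Y u = (1 - t/(1+t)) *\<^sub>R z + (t/(1+t)) *\<^sub>R y" by simp
  moreover have "z - y = (1 + t) *\<^sub>R (Y u - y)" by (simp add: z_def algebra_simps)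
  then have "z \<noteq> y" using ne t(1) by auto
  ultimately have "Y u \<in> open_segment z y"
    unfolding in_segment using t(1) by (intro conjI exI[where x="t/(1+t)"]) auto
  then show False using Yu_extreme z y unfolding extreme_point_of_def by blast
qed

lemma e_Y_nonneg: "i \<in> I \<Longrightarrow> 0 \<le> e \<bullet> Y i"
  by (rule e_convex_hull_Y_nonneg) (simp add: hull_inc)

lemma e_X_nonneg: "i \<in> I \<Longrightarrow> 0 \<le> e \<bullet> X i"
  unfolding e_def by (rule inner_indicator_vec_nonneg) (use X_nonneg T_subset_C in auto)

lemma e_X_eq_0_iff:
  assumes i: "i \<in> I"
  shows "e \<bullet> X i = 0 \<longleftrightarrow> e \<bullet> Y i = 0"
proof -
  have "e \<bullet> X i = 0 \<longleftrightarrow> (\<forall>j\<in>T. X i $ j = 0)" unfolding e_def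
    by (rule inner_indicator_vec_eq_0_iff) (use X_nonneg[OF i] T_subset_C in auto)
  moreover have "e \<bullet> Y i = 0 \<longleftrightarrow> (\<forall>j\<in>T. Y i $ j = 0)" unfolding e_def
    by (rule inner_indicator_vec_eq_0_iff) (use Y_nonneg[OF i] T_subset_C in auto)
  ultimately show ?thesis using X_zero_iff_Y_zero[OF i] T_subset_C by auto
qed

lemma J_subset_I: "J \<subseteq> I" by (auto simp: J_def)

lemma e_Y_pos: "i \<in> J \<Longrightarrow> 0 < e \<bullet> Y i" using e_Y_nonneg by (force simp: J_def)

lemma e_X_pos: "i \<in> J \<Longrightarrow> 0 < e \<bullet> X i" using e_X_nonneg e_X_eq_0_iff by (force simp: J_def)

lemma convex_hull_Y_e_eq_0:
  assumes "y \<in> convex hull (Y`I)" "e \<bullet> y = 0"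
  shows "y = Y u"
proof (rule convex_hull_Y_zero_on_T[OF assms(1)])
  have "\<forall>j\<in>T. 0 \<le> y $ j" using convex_hull_Y_nonneg[OF assms(1)] T_subset_C by auto
  from inner_indicator_vec_eq_0_iff[OF this] show "\<forall>j\<in>T. y $ j = 0"
    using assms(2) by (simp add: e_def)
qed

lemma image_Y_eq: "Y`I = insert (Y u) (Y`J)"
  using convex_hull_Y_e_eq_0[OF hull_inc] u_in_I J_subset_I by (auto simp: J_def)

lemma J_nonempty: "J \<noteq> {}"
  using image_Y_eq aff_dim_Y_pos by auto

lemma e_qY: "i \<in> J \<Longrightarrow> e \<bullet> qY i = 1"
  using e_Y_pos[of i] by (simp add: qY_def inner_central_projection e_Yu)

lemma e_qX: "i \<in> J \<Longrightarrow> e \<bullet> qX i = 1"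
  using e_X_pos[of i] by (simp add: qX_def inner_central_projection e_Xu)

lemma qY_on_T: "i \<in> J \<Longrightarrow> j \<in> T \<Longrightarrow> qY i $ j = Y i $ j / (e \<bullet> Y i)"
  using Yu_zero_on_T by (simp add: qY_def central_projection_def)

lemma qX_on_T: "i \<in> J \<Longrightarrow> j \<in> T \<Longrightarrow> qX i $ j = X i $ j / (e \<bullet> X i)"
  using Xu_zero_on_T by (simp add: qX_def central_projection_def)

lemma qY_nonneg: "i \<in> J \<Longrightarrow> j \<in> T \<Longrightarrow> 0 \<le> qY i $ j"
  unfolding qY_on_T by (rule divide_nonneg_pos) (use Y_nonneg J_subset_I T_subset_C e_Y_pos in auto)

lemma qX_nonneg: "i \<in> J \<Longrightarrow> j \<in> T \<Longrightarrow> 0 \<le> qX i $ j"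
  unfolding qX_on_T by (rule divide_nonneg_pos) (use X_nonneg J_subset_I T_subset_C e_X_pos in auto)

lemma central_projection_in_affine_hull_image:
  assumes "i \<in> I" "u \<in> I"
  shows "central_projection e (Z u) (Z i) \<in> affine hull (Z`I)"
  unfolding central_projection_def
  using mem_affine[OF affine_affine_hull, of "Z u" "Z`I" "Z i" "1 - 1 / (e \<bullet> Z i)" "1 / (e \<bullet> Z i)"] assms
  by (auto simp: hull_inc algebra_simps)

lemma qY_in_affine_hull: "i \<in> J \<Longrightarrow> qY i \<in> affine hull (Y`I)"
  using central_projection_in_affine_hull_image J_subset_I u_in_I by (auto simp: qY_def)

lemma qX_in_affine_hull: "i \<in> J \<Longrightarrow> qX i \<in> affine hull (X`I)"
  using central_projection_in_affine_hull_image J_subset_I u_in_I by (auto simp: qX_def)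

lemma affine_hull_insert_qY: "affine hull (insert (Y u) (qY`J)) = affine hull (Y`I)"
proof (rule subset_antisym)
  show "affine hull (insert (Y u) (qY`J)) \<subseteq> affine hull (Y`I)"
    by (rule hull_minimal) (use qY_in_affine_hull u_in_I in \<open>auto simp: hull_inc\<close>)
  have "Y i \<in> affine hull (insert (Y u) (qY`J))" if "i \<in> J" for i
  proof -
    have "Y i = (1 - e \<bullet> Y i) *\<^sub>R Y u + (e \<bullet> Y i) *\<^sub>R qY i"
      using central_projection_inverse[of e "Y i" "Y u"] e_Y_pos[OF that]
      by (simp add: qY_def algebra_simps)
    then show ?thesis
      by (metis mem_affine[OF affine_affine_hull] hull_inc insertI1 insertI2 image_eqI that
          diff_add_cancel)
  qed
  then show "affine hull (Y`I) \<subseteq> affine hull (insert (Y u) (qY`J))"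
    unfolding image_Y_eq by (intro hull_minimal) (auto simp: hull_inc)
qed

lemma Yu_notin_affine_hull_qY: "Y u \<notin> affine hull (qY`J)"
  using inner_eq_on_affine_hull[of "qY`J" e 1 "Y u"] e_qY e_Yu by auto

lemma Xu_notin_affine_hull_qX: "X u \<notin> affine hull (qX`J)"
  using inner_eq_on_affine_hull[of "qX`J" e 1 "X u"] e_qX e_Xu by auto

lemma aff_dim_qY: "aff_dim (qY`J) = aff_dim (Y`I) - 1"
  using aff_dim_insert[of "Y u" "qY`J"] Yu_notin_affine_hull_qY
  by (metis aff_dim_affine_hull affine_hull_insert_qY add_diff_cancel_right')

lemma affine_hull_insert_qX_subset: "affine hull (insert (X u) (qX`J)) \<subseteq> affine hull (X`I)"
  by (rule hull_minimal) (use qX_in_affine_hull u_in_I in \<open>auto simp: hull_inc\<close>)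

lemma aff_dim_qX_le: "aff_dim (qX`J) + 1 \<le> aff_dim (X`I)"
proof -
  have "aff_dim (insert (X u) (qX`J)) \<le> aff_dim (X`I)"
    by (metis affine_hull_insert_qX_subset aff_dim_affine_hull aff_dim_subset)
  then show ?thesis using aff_dim_insert[of "X u" "qX`J"] Xu_notin_affine_hull_qX by simp
qed

lemma central_projection_Y_in_figure:
  assumes "y \<in> convex hull (Y`I)" "0 < e \<bullet> y"
  shows "central_projection e (Y u) y \<in> convex hull (qY`J)"
  using central_projection_in_convex_hull[of J e "Y u" Y y] assms e_Yu e_Y_pos image_Y_eq
  by (simp add: qY_def)

lemma orthant_slice_qY: "orthant_slice T (qY`J)"
  unfolding orthant_slice_def
proof (rule subset_antisym)
  show "convex hull (qY`J) \<subseteq> affine hull (qY`J) \<inter> {y. \<forall>j\<in>T. 0 \<le> y $ j}"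
    by (rule convex_hull_subset_orthant_slice) (use qY_nonneg in auto)
next
  show "affine hull (qY`J) \<inter> {y. \<forall>j\<in>T. 0 \<le> y $ j} \<subseteq> convex hull (qY`J)"
  proof
    fix x assume "x \<in> affine hull (qY`J) \<inter> {y. \<forall>j\<in>T. 0 \<le> y $ j}"
    then have x: "x \<in> affine hull (qY`J)" and xT: "\<forall>j\<in>T. 0 \<le> x $ j" by auto
    obtain t where t: "t > 0" "\<forall>j\<in>C - T. 0 \<le> Y u $ j + t * (x - Y u) $ j"
      using exists_small_step_nonneg[of "C - T" "\<lambda>j. Y u $ j" "\<lambda>j. (x - Y u) $ j"] Yu_pos_off_T
      by auto
    define z where "z = (1 - t) *\<^sub>R Y u + t *\<^sub>R x"
    have ex: "e \<bullet> x = 1" using inner_eq_on_affine_hull[of "qY`J" e 1 x] e_qY x by auto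
    have "x \<in> affine hull (Y`I)"
      using x hull_mono[of "qY`J" "insert (Y u) (qY`J)" affine] affine_hull_insert_qY by auto
    then have "z \<in> affine hull (Y`I)" unfolding z_def
      by (intro mem_affine[OF affine_affine_hull]) (use u_in_I in \<open>auto simp: hull_inc\<close>)
    moreover have "0 \<le> z $ j" if "j \<in> C" for j
      using Yu_zero_on_T xT t that by (cases "j \<in> T") (simp_all add: z_def algebra_simps)
    ultimately have "z \<in> convex hull (Y`I)" using slice_Y by auto
    moreover have "e \<bullet> z = t" using ex e_Yu by (simp add: z_def inner_add_right)
    ultimately have "central_projection e (Y u) z \<in> convex hull (qY`J)"
      using central_projection_Y_in_figure t(1) by simp
    moreover have "central_projection e (Y u) z = x"
      using t(1) \<open>e \<bullet> z = t\<close> by (simp add: central_projection_def z_def algebra_simps)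
    ultimately show "x \<in> convex hull (qY`J)" by simp
  qed
qed

lemma slice_transfer_hyps_figure: "slice_transfer_hyps J T qX qY"
  unfolding slice_transfer_hyps_def nonneg_same_zeros_def
proof (intro conjI ballI J_nonempty orthant_slice_qY)
  fix i j assume i: "i \<in> J" and j: "j \<in> T"
  show "0 \<le> qX i $ j" "0 \<le> qY i $ j" using qX_nonneg[OF i j] qY_nonneg[OF i j] by auto
  show "qX i $ j = 0 \<longleftrightarrow> qY i $ j = 0"
    using qX_on_T[OF i j] qY_on_T[OF i j] X_zero_iff_Y_zero J_subset_I T_subset_C i j
      e_X_pos[OF i] e_Y_pos[OF i] by auto
next
  show "aff_dim (qX`J) \<le> aff_dim (qY`J)" using aff_dim_qX_le aff_dim_qY aff_dim_X_le by simp
qed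

text \<open>A hyperplane exposing the vertex qY v of the figure, pulled back through the central
  projection from Y u, supports the polytope along the ray from Y u through qY v.\<close>

lemma figure_vertex_supporting_hyperplane:
  assumes "v \<in> vertex_indices J qY"
  obtains G c0 where "\<And>y. y \<in> convex hull (Y`I) \<Longrightarrow> G \<bullet> y \<le> c0"
    and "\<And>y. y \<in> convex hull (Y`I) \<Longrightarrow> 0 < e \<bullet> y \<Longrightarrow>
           G \<bullet> y = c0 \<longleftrightarrow> central_projection e (Y u) y = qY v"
proof -
  let ?Q = "convex hull (qY`J)" and ?p = "central_projection e (Y u)"
  have "{qY v} face_of ?Q"
    using assms by (simp add: vertex_indices_def face_of_singleton)
  then have "{qY v} exposed_face_of ?Q"
    by (simp add: exposed_face_of_polyhedron polytope_imp_polyhedron polytope_convex_hull)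
  then obtain h b where hb: "?Q \<subseteq> {x. h \<bullet> x \<le> b}" "{qY v} = ?Q \<inter> {x. h \<bullet> x = b}"
    unfolding exposed_face_of_def by blast
  define G where "G = h - (b - h \<bullet> Y u) *\<^sub>R e"
  have G: "G \<bullet> y - h \<bullet> Y u = (e \<bullet> y) * (h \<bullet> ?p y - b)" if "e \<bullet> y \<noteq> 0" for y
    using that e_Yu by (simp add: G_def central_projection_def inner_diff_left inner_add_right
      inner_diff_right algebra_simps)
  show ?thesis
  proof (rule that)
    fix y assume y: "y \<in> convex hull (Y`I)"
    show "G \<bullet> y \<le> h \<bullet> Y u"
    proof (cases "e \<bullet> y = 0")
      case True
      then show ?thesis using convex_hull_Y_e_eq_0[OF y] e_Yu by (simp add: G_def inner_diff_left)
    next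
      case False
      then have "0 < e \<bullet> y" using e_convex_hull_Y_nonneg[OF y] by simp
      moreover have "h \<bullet> ?p y \<le> b" using hb(1) central_projection_Y_in_figure[OF y] \<open>0 < e \<bullet> y\<close> by auto
      ultimately have "(e \<bullet> y) * (h \<bullet> ?p y - b) \<le> 0" by (simp add: mult_nonneg_nonpos)
      then show ?thesis using G[OF False] by simp
    qed
    assume "0 < e \<bullet> y"
    have "G \<bullet> y = h \<bullet> Y u \<longleftrightarrow> G \<bullet> y - h \<bullet> Y u = 0" by (rule eq_iff_diff_eq_0)
    also have "\<dots> \<longleftrightarrow> h \<bullet> ?p y = b" using G[of y] \<open>0 < e \<bullet> y\<close> by simp
    also have "\<dots> \<longleftrightarrow> ?p y = qY v"
      using hb(2) central_projection_Y_in_figure[OF y \<open>0 < e \<bullet> y\<close>] by blast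
    finally show "G \<bullet> y = h \<bullet> Y u \<longleftrightarrow> ?p y = qY v" .
  qed
qed

lemma figure_vertex_lifts:
  assumes v: "v \<in> vertex_indices J qY"
  obtains u' where "u' \<in> J" "u' \<in> vertex_indices I Y" "qY u' = qY v"
proof -
  let ?K = "convex hull (Y`I)" and ?p = "central_projection e (Y u)"
  obtain G c0 where G: "\<And>y. y \<in> ?K \<Longrightarrow> G \<bullet> y \<le> c0"
    "\<And>y. y \<in> ?K \<Longrightarrow> 0 < e \<bullet> y \<Longrightarrow> G \<bullet> y = c0 \<longleftrightarrow> ?p y = qY v"
    using figure_vertex_supporting_hyperplane[OF v] by blast
  define R where "R = ?K \<inter> {y. G \<bullet> y = c0}"
  have "R face_of ?K" unfolding R_def
    by (rule face_of_Int_supporting_hyperplane_le) (use G(1) in auto)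
  moreover have "compact R" unfolding R_def
    by (intro compact_Int_closed compact_convex_hull finite_imp_compact closed_hyperplane) simp
  moreover have vJ: "v \<in> J" using v by (simp add: vertex_indices_def)
  then have "Y v \<in> R" using G(2)[of "Y v"] e_Y_pos J_subset_I by (auto simp: R_def hull_inc qY_def)
  moreover have "y = y'" if "y \<in> R" "y' \<in> R" "e \<bullet> y = e \<bullet> y'" "e \<bullet> Y v \<le> e \<bullet> y" for y y'
  proof -
    have "0 < e \<bullet> y" "0 < e \<bullet> y'" using that(3,4) e_Y_pos[OF vJ] by linarith+
    then have "?p y = qY v" "?p y' = qY v" using that(1,2) G(2) by (auto simp: R_def)
    then show ?thesis
      using central_projection_inverse[of e y "Y u"] central_projection_inverse[of e y' "Y u"]
        \<open>0 < e \<bullet> y\<close> that(3) by auto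
  qed
  ultimately obtain z where z: "z extreme_point_of ?K" "z \<in> R" "e \<bullet> Y v \<le> e \<bullet> z"
    by (rule extreme_point_maximizing_on_face)
  then obtain u' where u': "u' \<in> I" "z = Y u'" using extreme_point_of_convex_hull by blast
  have "0 < e \<bullet> z" using z(3) e_Y_pos[OF vJ] by linarith
  then have "u' \<in> J" "qY u' = qY v"
    using u' z(2) G(2)[of z] by (auto simp: J_def R_def qY_def)
  moreover have "u' \<in> vertex_indices I Y" using u' z(1) by (simp add: vertex_indices_def)
  ultimately show ?thesis using that by blast
qed

end

locale vertex_figure_IH = vertex_figure +
  assumes figure_concls: "slice_transfer_concls J T qX qY"
begin

lemma slice_qX: "convex hull (qX`J) = affine hull (qX`J) \<inter> {x. \<forall>j\<in>T. 0 \<le> x $ j}"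
  and aff_dim_qX: "aff_dim (qX`J) = aff_dim (qY`J)"
  and convex_hull_qX_vertices: "convex hull (qX`J) = convex hull (qX ` vertex_indices J qY)"
  and qX_vertex_unique: "v \<in> vertex_indices J qY \<Longrightarrow> x \<in> affine hull (qX`J) \<Longrightarrow>
        \<forall>j\<in>T. qY v $ j = 0 \<longrightarrow> x $ j = 0 \<Longrightarrow> x = qX v"
  using figure_concls unfolding slice_transfer_concls_def orthant_slice_def by blast+

lemma aff_dim_X: "aff_dim (X`I) = aff_dim (Y`I)"
  and affine_hull_insert_qX: "affine hull (insert (X u) (qX`J)) = affine hull (X`I)"
proof -
  have "aff_dim (insert (X u) (qX`J)) = aff_dim (Y`I)"
    using aff_dim_insert[of "X u" "qX`J"] Xu_notin_affine_hull_qX aff_dim_qX aff_dim_qY by simp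
  moreover have "aff_dim (insert (X u) (qX`J)) \<le> aff_dim (X`I)"
    by (metis affine_hull_insert_qX_subset aff_dim_affine_hull aff_dim_subset)
  ultimately show dim: "aff_dim (X`I) = aff_dim (Y`I)" using aff_dim_X_le by simp
  have "affine hull (affine hull (insert (X u) (qX`J))) = affine hull (affine hull (X`I))"
    using aff_dim_eq_full_gen[OF affine_hull_insert_qX_subset] dim
      \<open>aff_dim (insert (X u) (qX`J)) = aff_dim (Y`I)\<close> by simp
  then show "affine hull (insert (X u) (qX`J)) = affine hull (X`I)" by simp
qed

text \<open>A point x of the affine hull vanishing where Y u does lies on the hyperplane e = 0 through
  X u; translating a point of the figure by multiples of x - X u stays in the figure, which is
  bounded, so x = X u.\<close>

lemma X_vertex_unique:
  assumes x: "x \<in> affine hull (X`I)" and zeros: "\<forall>j\<in>C. Y u $ j = 0 \<longrightarrow> x $ j = 0"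
  shows "x = X u"
proof -
  have xT: "\<forall>j\<in>T. x $ j = 0" using zeros by (auto simp: T_def)
  have ex: "e \<bullet> x = 0" using xT by (simp add: e_def inner_indicator_vec)
  obtain i0 where i0: "i0 \<in> J" using J_nonempty by blast
  have "qX i0 + s *\<^sub>R (x - X u) \<in> convex hull (qX`J)" for s
  proof -
    define xs where "xs = (1 - s) *\<^sub>R X u + s *\<^sub>R x"
    have "xs \<in> affine hull (insert (X u) (qX`J))" unfolding xs_def affine_hull_insert_qX
      by (intro mem_affine[OF affine_affine_hull]) (use x u_in_I in \<open>auto simp: hull_inc\<close>)
    moreover have "e \<bullet> xs = 0" using ex e_Xu by (simp add: xs_def inner_add_right)
    ultimately have "qX i0 + (xs - X u) \<in> affine hull (qX`J)"
      by (intro affine_hull_add_apex_direction[OF _ e_Xu]) (use e_qX i0 in \<open>auto simp: hull_inc\<close>)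
    moreover have "xs - X u = s *\<^sub>R (x - X u)" by (simp add: xs_def algebra_simps)
    moreover have "\<forall>j\<in>T. 0 \<le> (qX i0 + s *\<^sub>R (x - X u)) $ j"
      using qX_nonneg[OF i0] xT Xu_zero_on_T by simp
    ultimately show ?thesis using slice_qX by simp
  qed
  moreover have "bounded (convex hull (qX`J))"
    by (simp add: compact_imp_bounded compact_convex_hull finite_imp_compact)
  ultimately show ?thesis using bounded_line_direction_zero by fastforce
qed

lemma figure_vertex_lifts_X:
  assumes v: "v \<in> vertex_indices J qY"
  obtains u' where "u' \<in> vertex_indices I Y" "u' \<in> J" "qX u' = qX v"
proof -
  obtain u' where u': "u' \<in> J" "u' \<in> vertex_indices I Y" "qY u' = qY v"
    using figure_vertex_lifts[OF v] by blast
  have "qX u' = qX v"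
  proof (rule qX_vertex_unique[OF v])
    show "qX u' \<in> affine hull (qX`J)" using u'(1) by (simp add: hull_inc)
    show "\<forall>j\<in>T. qY v $ j = 0 \<longrightarrow> qX u' $ j = 0"
    proof (intro ballI impI)
      fix j assume j: "j \<in> T" "qY v $ j = 0"
      then have "Y u' $ j = 0" using qY_on_T[OF u'(1) j(1)] u'(3) e_Y_pos[OF u'(1)] by simp
      then have "X u' $ j = 0" using X_zero_iff_Y_zero u'(1) J_subset_I T_subset_C j(1) by auto
      then show "qX u' $ j = 0" using qX_on_T[OF u'(1) j(1)] by simp
    qed
  qed
  then show ?thesis using that u' by blast
qed

text \<open>Within the slice, the cone at X u is spanned by the directions to the figure, whose vertices
  come from vertices of Y: a linear functional minimised over those vertices at X u is
  minimised over the whole slice at X u.\<close>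

lemma X_vertex_minimizes:
  assumes g: "\<forall>u'\<in>vertex_indices I Y. g \<bullet> X u \<le> g \<bullet> X u'"
    and y: "y \<in> affine hull (X`I)" "\<forall>j\<in>C. 0 \<le> y $ j"
  shows "g \<bullet> X u \<le> g \<bullet> y"
proof (cases "e \<bullet> y = 0")
  case True
  have "\<forall>j\<in>T. 0 \<le> y $ j" using y(2) T_subset_C by auto
  from inner_indicator_vec_eq_0_iff[OF this] have "\<forall>j\<in>T. y $ j = 0"
    using True by (simp add: e_def)
  then have "y = X u" by (intro X_vertex_unique[OF y(1)]) (auto simp: T_def)
  then show ?thesis by simp
next
  case False
  define t where "t = e \<bullet> y"
  have "0 \<le> t" unfolding t_def e_def
    by (rule inner_indicator_vec_nonneg) (use y(2) T_subset_C in auto)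
  then have t: "0 < t" using False by (simp add: t_def)
  define z where "z = central_projection e (X u) y"
  have "z \<in> affine hull (qX`J)" unfolding z_def
    by (rule central_projection_in_affine_hull[OF _ e_Xu])
      (use e_qX y(1) affine_hull_insert_qX False in auto)
  moreover have "\<forall>j\<in>T. 0 \<le> z $ j"
    using Xu_zero_on_T y(2) T_subset_C t by (auto simp: z_def central_projection_def t_def)
  ultimately have "z \<in> convex hull (qX ` vertex_indices J qY)"
    using slice_qX convex_hull_qX_vertices by auto
  moreover have "convex hull (qX ` vertex_indices J qY) \<subseteq> {x. g \<bullet> X u \<le> g \<bullet> x}"
  proof (rule hull_minimal)
    show "qX ` vertex_indices J qY \<subseteq> {x. g \<bullet> X u \<le> g \<bullet> x}"
    proof
      fix r assume "r \<in> qX ` vertex_indices J qY"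
      then obtain v where v: "v \<in> vertex_indices J qY" "r = qX v" by auto
      obtain u' where u': "u' \<in> vertex_indices I Y" "u' \<in> J" "qX u' = qX v"
        using figure_vertex_lifts_X[OF v(1)] by blast
      have "r = qX u'" using v u' by simp
      then have "g \<bullet> r = g \<bullet> X u + (1 / (e \<bullet> X u')) * (g \<bullet> X u' - g \<bullet> X u)"
        by (simp add: qX_def central_projection_def inner_add_right inner_diff_right)
      moreover have "0 \<le> (1 / (e \<bullet> X u')) * (g \<bullet> X u' - g \<bullet> X u)"
        using e_X_pos[OF u'(2)] g u'(1) by simp
      ultimately show "r \<in> {x. g \<bullet> X u \<le> g \<bullet> x}" by simp
    qed
  qed (simp add: convex_halfspace_ge)
  ultimately have "g \<bullet> X u \<le> g \<bullet> z" by auto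
  moreover have "y = X u + t *\<^sub>R (z - X u)"
    using central_projection_inverse[of e y "X u"] False by (simp add: z_def t_def)
  then have "g \<bullet> y = g \<bullet> X u + t * (g \<bullet> z - g \<bullet> X u)"
    by (metis inner_add_right inner_diff_right inner_scaleR_right)
  ultimately show ?thesis using t by simp
qed

end

lemma slice_transfer_base:
  assumes hyps: "slice_transfer_hyps I C X Y" and dim: "aff_dim (Y`I) = 0"
  shows "slice_transfer_concls I C X Y"
proof -
  have I: "I \<noteq> {}" using hyps by (simp add: slice_transfer_hyps_def)
  then have "aff_dim (X`I) \<ge> 0" by (metis aff_dim_negative_iff image_is_empty not_le)
  moreover have "aff_dim (X`I) \<le> 0" using hyps dim by (simp add: slice_transfer_hyps_def)
  ultimately obtain a where a: "X`I = {a}" using aff_dim_eq_0 by (metis order_antisym)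
  obtain b where b: "Y`I = {b}" using dim aff_dim_eq_0 by metis
  have "vertex_indices I Y = I" using b by (auto simp: vertex_indices_def extreme_point_of_def)
  moreover have "\<forall>j\<in>C. 0 \<le> a $ j"
    using hyps a I by (force simp: slice_transfer_hyps_def nonneg_same_zeros_def)
  ultimately show ?thesis using a b by (auto simp: slice_transfer_concls_def orthant_slice_def)
qed

lemma slice_transfer_step:
  fixes I :: "'p::finite set" and C :: "'q::finite set" and X Y :: "'p \<Rightarrow> real^'q"
  assumes hyps: "slice_transfer_hyps I C X Y" and dim: "aff_dim (Y`I) = int (Suc n)"
    and IH: "\<And>I' C' X' Y'. slice_transfer_hyps I' C' (X' :: 'p \<Rightarrow> real^'q) Y' \<Longrightarrow>
      aff_dim (Y'`I') = int n \<Longrightarrow> slice_transfer_concls I' C' X' Y'"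
  shows "slice_transfer_concls I C X Y"
proof -
  define V where "V = vertex_indices I Y"
  have figure: "vertex_figure_IH I C X Y u" if "u \<in> V" for u
  proof -
    interpret vertex_figure I C X Y u by unfold_locales (use hyps that dim in \<open>auto simp: V_def\<close>)
    show ?thesis
      by unfold_locales (use IH[OF slice_transfer_hyps_figure] aff_dim_qY dim in simp)
  qed
  have I: "I \<noteq> {}" using hyps by (simp add: slice_transfer_hyps_def)
  have V: "V \<subseteq> I" "V \<noteq> {}" using vertex_indices_nonempty[OF _ I] by (auto simp: V_def vertex_indices_def)
  have "affine hull (X`I) \<inter> {y. \<forall>j\<in>C. 0 \<le> y $ j} \<subseteq> convex hull (X`V)"
    by (rule subset_convex_hull_if_minimizers)
      (use V vertex_figure_IH.X_vertex_minimizes[OF figure] in \<open>auto simp: V_def\<close>)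
  moreover have "convex hull (X`V) \<subseteq> convex hull (X`I)" using V(1) by (intro hull_mono) auto
  moreover have "convex hull (X`I) \<subseteq> affine hull (X`I) \<inter> {y. \<forall>j\<in>C. 0 \<le> y $ j}"
    using hyps by (intro convex_hull_subset_orthant_slice)
      (auto simp: slice_transfer_hyps_def nonneg_same_zeros_def)
  moreover obtain u where "u \<in> V" using V by blast
  ultimately show ?thesis
    using vertex_figure_IH.aff_dim_X[OF figure] vertex_figure_IH.X_vertex_unique[OF figure]
    unfolding slice_transfer_concls_def orthant_slice_def V_def[symmetric] by blast
qed

theorem slice_transfer:
  fixes I :: "'p::finite set" and C :: "'q::finite set" and X Y :: "'p \<Rightarrow> real^'q"
  assumes "slice_transfer_hyps I C X Y"
  shows "slice_transfer_concls I C X Y"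
proof -
  have "I \<noteq> {}" using assms by (simp add: slice_transfer_hyps_def)
  then obtain n where "aff_dim (Y`I) = int n"
    by (metis aff_dim_negative_iff image_is_empty nonneg_int_cases not_le)
  then show ?thesis using assms
  proof (induction n arbitrary: I C X Y)
    case 0
    then show ?case by (simp add: slice_transfer_base)
  next
    case (Suc n)
    then show ?case by (blast intro: slice_transfer_step)
  qed
qed

lemma rows_eq_range: "rows (M::real^'q::finite^'p::finite) = range (\<lambda>i. M $ i)"
  by (auto simp: rows_def row_def vec_lambda_eta)

lemma aff_dim_rows_nonneg: "0 \<le> aff_dim (rows (M::real^'q::finite^'p::finite))"
proof -
  have "rows M \<noteq> {}" by (simp add: rows_eq_range)
  then show ?thesis using aff_dim_negative_iff[of "rows M"] by linarith
qed

lemma rank_eq_aff_dim_rows: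
  fixes M :: "real^'q::finite^'p::finite"
  assumes "0 \<notin> affine hull (rows M)"
  shows "int (rank M) = aff_dim (rows M) + 1"
proof -
  have "aff_dim (insert 0 (rows M)) = aff_dim (rows M) + 1"
    using aff_dim_insert[of 0 "rows M"] assms by simp
  moreover have "aff_dim (insert 0 (rows M)) = int (dim (insert 0 (rows M)))"
    by (rule aff_dim_zero) (simp add: hull_inc)
  moreover have "dim (insert 0 (rows M)) = dim (rows M)" by (metis dim_span span_insert_0)
  ultimately show ?thesis by (simp add: row_rank_def)
qed

lemma span_columns_eq_range:
  fixes M :: "real^'q::finite^'p::finite"
  shows "span (columns M) = range (\<lambda>x. M *v x)"
proof
  show "span (columns M) \<subseteq> range (\<lambda>x. M *v x)"
  proof (rule span_minimal)
    show "columns M \<subseteq> range (\<lambda>x. M *v x)" by (auto simp: columns_image_basis)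
    show "subspace (range (\<lambda>x. M *v x))"
      using linear_subspace_image[OF matrix_vector_mul_linear subspace_UNIV, of M] by (simp add: image_def)
  qed
qed (auto intro: matrix_vector_mult_in_columnspace)

lemma ones_in_column_span_iff:
  fixes M :: "real^'q::finite^'p::finite"
  shows "(\<chi> i. 1) \<in> span (columns M) \<longleftrightarrow> 0 \<notin> affine hull (rows M)"
proof -
  have "(\<chi> i. 1) \<in> span (columns M) \<longleftrightarrow> (\<exists>x. M *v x = (\<chi> i. 1))"
    unfolding span_columns_eq_range by (metis rangeE rangeI)
  also have "\<dots> \<longleftrightarrow> (\<exists>x. \<forall>i. x \<bullet> M $ i = 1)"
    by (simp add: vec_eq_iff matrix_vector_mul_component inner_commute)
  also have "\<dots> \<longleftrightarrow> 0 \<notin> affine hull (rows M)"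
  proof
    assume "\<exists>x. \<forall>i. x \<bullet> M $ i = 1"
    then obtain x where "\<forall>i. x \<bullet> M $ i = 1" by blast
    then show "0 \<notin> affine hull (rows M)"
      using inner_eq_on_affine_hull[of "rows M" x 1 0] by (auto simp: rows_eq_range)
  next
    assume "0 \<notin> affine hull (rows M)"
    then obtain a b where ab: "a \<bullet> 0 < b" "\<forall>x\<in>affine hull (rows M). b < a \<bullet> x"
      using separating_hyperplane_closed_point[of "affine hull (rows M)" 0]
      by (auto simp: affine_imp_convex)
    obtain i0 :: 'p where True by blast
    define c where "c = a \<bullet> M $ i0"
    have rows: "M $ i \<in> affine hull (rows M)" for i by (simp add: rows_eq_range hull_inc)
    have "0 < c" using ab rows[of i0] by (force simp: c_def)
    moreover have "a \<bullet> M $ i = c" for i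
      using inner_const_on_affine_if_bounded_below[OF affine_affine_hull ab(2) rows rows]
      by (simp add: c_def)
    ultimately have "\<forall>i. ((1/c) *\<^sub>R a) \<bullet> M $ i = 1" by simp
    then show "\<exists>x. \<forall>i. x \<bullet> M $ i = 1" by blast
  qed
  finally show ?thesis .
qed

section \<open>Slack matrices\<close>

definition slack_map :: "nat \<Rightarrow> ('q \<Rightarrow> nat \<Rightarrow> real) \<Rightarrow> ('q \<Rightarrow> real) \<Rightarrow> (nat \<Rightarrow> real) \<Rightarrow> real^'q" where
  "slack_map n W w x = (\<chi> j. w j - (\<Sum>k<n. W j k * x k))"

lemma slack_map_affine_combination:
  fixes l :: "'i \<Rightarrow> real" and y :: "'i \<Rightarrow> nat \<Rightarrow> real"
  assumes "\<forall>k<n. x k = (\<Sum>i\<in>A. l i * y i k)" "sum l A = 1"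
  shows "slack_map n W w x = (\<Sum>i\<in>A. l i *\<^sub>R slack_map n W w (y i))"
proof -
  have "(\<Sum>k<n. W j k * x k) = (\<Sum>i\<in>A. l i * (\<Sum>k<n. W j k * y i k))" for j
    using assms(1) by (simp add: sum_distrib_left mult.left_commute sum.swap[of _ A])
  then show ?thesis using assms(2)
    by (simp add: vec_eq_iff slack_map_def right_diff_distrib sum_subtractf flip: sum_distrib_right)
qed

lemma slack_map_diff:
  "slack_map n W w x - slack_map n W w y = (\<chi> j. - (\<Sum>k<n. W j k * (x k - y k)))"
  by (simp add: vec_eq_iff slack_map_def sum_subtractf right_diff_distrib)

locale slack_repr =
  fixes n :: nat and V :: "'p::finite \<Rightarrow> nat \<Rightarrow> real" and W :: "'q::finite \<Rightarrow> nat \<Rightarrow> real"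
    and w :: "'q \<Rightarrow> real" and S :: "real^'q^'p"
  assumes conv_eq_ineq: "conv_rows n V = ineq_set n W w"
    and slack_eq: "\<forall>i j. S $ i $ j = w j - (\<Sum>k<n. W j k * V i k)"
begin

abbreviation "P \<equiv> conv_rows n V"

abbreviation "L \<equiv> slack_map n W w"

text \<open>The i-th vertex as a point of R^n (V i may be nonzero at coordinates k \<ge> n).\<close>

definition vertex :: "'p \<Rightarrow> nat \<Rightarrow> real" where
  "vertex i k = (if k < n then V i k else 0)"

lemma mem_P_conv: "x \<in> P \<longleftrightarrow> x \<in> Rn n \<and> (\<exists>l :: 'p \<Rightarrow> real. (\<forall>i. l i \<ge> 0) \<and>
    (\<Sum>i\<in>UNIV. l i) = 1 \<and> (\<forall>k<n. x k = (\<Sum>i\<in>UNIV. l i * V i k)))"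
  by (simp add: conv_rows_def)

lemma mem_P_ineq: "x \<in> P \<longleftrightarrow> x \<in> Rn n \<and> (\<forall>j. (\<Sum>k<n. W j k * x k) \<le> w j)"
  using conv_eq_ineq by (simp add: ineq_set_def)

lemma vertex_in_Rn: "vertex i \<in> Rn n"
  by (simp add: Rn_def vertex_def)

lemma vertex_in_P: "vertex i \<in> P"
  unfolding mem_P_conv
proof (intro conjI vertex_in_Rn exI[where x="\<lambda>i'. if i' = i then 1 else 0"] allI impI)
  fix k assume "k < n"
  have "(\<Sum>i'\<in>UNIV. (if i' = i then 1 else 0) * V i' k) = (\<Sum>i'\<in>UNIV. if i' = i then V i' k else 0)"
    by (rule sum.cong) auto
  then show "vertex i k = (\<Sum>i'\<in>UNIV. (if i' = i then 1 else 0) * V i' k)"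
    using \<open>k < n\<close> by (simp add: vertex_def)
qed auto

lemma row_eq_slack_map: "S $ i = L (vertex i)"
  by (simp add: vec_eq_iff slack_map_def slack_eq vertex_def)

lemma slack_map_in_convex_hull_rows: "x \<in> P \<Longrightarrow> L x \<in> convex hull (rows S)"
proof -
  assume "x \<in> P"
  then obtain l :: "'p \<Rightarrow> real" where l: "\<forall>i. l i \<ge> 0" "(\<Sum>i\<in>UNIV. l i) = 1"
      "\<forall>k<n. x k = (\<Sum>i\<in>UNIV. l i * V i k)"
    unfolding mem_P_conv by blast
  have "\<forall>k<n. x k = (\<Sum>i\<in>UNIV. l i * vertex i k)" using l(3) by (simp add: vertex_def)
  then have "L x = (\<Sum>i\<in>UNIV. l i *\<^sub>R S $ i)"
    using slack_map_affine_combination l(2) by (simp add: row_eq_slack_map)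
  then show ?thesis unfolding rows_eq_range convex_hull_image_explicit[OF finite_class.finite_UNIV] using l
    by (intro CollectI exI[where x=l] conjI) auto
qed

lemma P_coordinate_bound:
  assumes "x \<in> P" "k < n"
  shows "\<bar>x k\<bar> \<le> (\<Sum>i\<in>UNIV. \<bar>V i k\<bar>)"
proof -
  obtain l :: "'p \<Rightarrow> real" where l: "\<forall>i. l i \<ge> 0" "(\<Sum>i\<in>UNIV. l i) = 1"
      "\<forall>k<n. x k = (\<Sum>i\<in>UNIV. l i * V i k)"
    using assms(1) unfolding mem_P_conv by blast
  have l1: "l i \<le> 1" for i
    using member_le_sum[of i UNIV l] l(1,2) by simp
  have "\<bar>x k\<bar> \<le> (\<Sum>i\<in>UNIV. \<bar>l i * V i k\<bar>)" using l(3) assms(2) by (simp add: sum_abs)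
  also have "\<dots> \<le> (\<Sum>i\<in>UNIV. \<bar>V i k\<bar>)"
    by (rule sum_mono) (use l(1) l1 in \<open>auto simp: abs_mult intro: mult_left_le_one_le\<close>)
  finally show ?thesis .
qed

lemma P_contains_no_ray:
  assumes d: "d \<in> Rn n" and ray: "\<And>t. t \<ge> 0 \<Longrightarrow> (\<lambda>k. x0 k + t * d k) \<in> P"
  shows "d = (\<lambda>k. 0)"
proof
  fix k show "d k = 0"
  proof (cases "k < n")
    case False then show ?thesis using d by (simp add: Rn_def)
  next
    case True
    show ?thesis
    proof (rule ccontr)
      assume dk: "d k \<noteq> 0"
      define B where "B = (\<Sum>i\<in>UNIV. \<bar>V i k\<bar>)"
      define t where "t = (B + \<bar>x0 k\<bar> + 1) / \<bar>d k\<bar>"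
      have B0: "0 \<le> B" by (simp add: B_def sum_nonneg)
      then have "t \<ge> 0" by (simp add: t_def)
      then have "\<bar>x0 k + t * d k\<bar> \<le> B" using P_coordinate_bound[OF ray True] by (simp add: B_def)
      moreover have "\<bar>t * d k\<bar> = B + \<bar>x0 k\<bar> + 1" using dk B0 by (simp add: t_def abs_mult)
      ultimately show False by linarith
    qed
  qed
qed

text \<open>Since P is bounded, the affine map L is injective on directions within R^n.\<close>

lemma slack_map_diff_eq_0_iff:
  assumes "y \<in> P" "d \<in> Rn n"
  shows "(\<forall>j. (\<Sum>k<n. W j k * d k) = 0) \<longleftrightarrow> d = (\<lambda>k. 0)"
proof
  assume Wd: "\<forall>j. (\<Sum>k<n. W j k * d k) = 0"
  show "d = (\<lambda>k. 0)"
  proof (rule P_contains_no_ray[OF assms(2)])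
    fix t :: real
    have "(\<Sum>k<n. W j k * (y k + t * d k)) = (\<Sum>k<n. W j k * y k) + t * (\<Sum>k<n. W j k * d k)" for j
      by (simp add: algebra_simps sum.distrib sum_distrib_left)
    then show "(\<lambda>k. y k + t * d k) \<in> P"
      using assms Wd by (simp add: mem_P_ineq Rn_def)
  qed
qed simp

lemma slack_nonneg: "0 \<le> S $ i $ j"
  using vertex_in_P[of i] unfolding mem_P_ineq
  by (simp add: row_eq_slack_map slack_map_def)

lemma orthant_slice_rows: "orthant_slice UNIV (rows S)"
  unfolding orthant_slice_def
proof (rule subset_antisym)
  show "convex hull rows S \<subseteq> affine hull rows S \<inter> {y. \<forall>j\<in>UNIV. 0 \<le> y $ j}"
    by (rule convex_hull_subset_orthant_slice) (auto simp: rows_eq_range slack_nonneg)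
  show "affine hull rows S \<inter> {y. \<forall>j\<in>UNIV. 0 \<le> y $ j} \<subseteq> convex hull rows S"
  proof
    fix y assume y: "y \<in> affine hull rows S \<inter> {y. \<forall>j\<in>UNIV. 0 \<le> y $ j}"
    obtain l where l: "sum l UNIV = 1" "(\<Sum>i\<in>UNIV. l i *\<^sub>R S $ i) = y"
      using y unfolding rows_eq_range affine_hull_image_explicit[OF finite_class.finite_UNIV] by blast
    define x where "x k = (if k < n then (\<Sum>i\<in>UNIV. l i * V i k) else 0)" for k
    have "\<forall>k<n. x k = (\<Sum>i\<in>UNIV. l i * vertex i k)" by (simp add: x_def vertex_def)
    from slack_map_affine_combination[where W=W and w=w, OF this l(1)] have Lx: "L x = y"
      using l(2) by (simp add: row_eq_slack_map)
    have "(\<Sum>k<n. W j k * x k) \<le> w j" for j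
      using y Lx by (auto simp: slack_map_def vec_eq_iff) (metis diff_ge_0_iff_ge)
    then have "x \<in> P" by (simp add: mem_P_ineq Rn_def x_def)
    then show "y \<in> convex hull rows S" using slack_map_in_convex_hull_rows Lx by blast
  qed
qed

text \<open>If 0 were an affine combination of the rows, its preimage x under L would satisfy all
  inequalities with equality, so P would contain the rays from each vertex away from x.\<close>

lemma zero_notin_affine_hull_rows:
  assumes "aff_dim (rows S) \<ge> 1"
  shows "0 \<notin> affine hull (rows S)"
proof
  assume "0 \<in> affine hull (rows S)"
  then obtain l where l: "sum l UNIV = 1" "(\<Sum>i\<in>UNIV. l i *\<^sub>R S $ i) = 0"
    unfolding rows_eq_range affine_hull_image_explicit[OF finite_class.finite_UNIV] by blast
  define x where "x k = (if k < n then (\<Sum>i\<in>UNIV. l i * V i k) else 0)" for k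
  have "\<forall>k<n. x k = (\<Sum>i\<in>UNIV. l i * vertex i k)" by (simp add: x_def vertex_def)
  from slack_map_affine_combination[where W=W and w=w, OF this l(1)] have Lx: "L x = 0"
    using l(2) by (simp add: row_eq_slack_map)
  have "S $ i = 0" for i
  proof -
    have "(\<lambda>k. vertex i k + t * (vertex i k - x k)) \<in> P" if "t \<ge> 0" for t
    proof -
      have "(\<Sum>k<n. W j k * (vertex i k + t * (vertex i k - x k)))
          = (\<Sum>k<n. W j k * vertex i k) + t * ((\<Sum>k<n. W j k * vertex i k) - w j)" for j
        using Lx by (simp add: vec_eq_iff slack_map_def algebra_simps sum.distrib sum_subtractf
          sum_distrib_left)
      moreover have "(\<Sum>k<n. W j k * vertex i k) \<le> w j" for j
        using vertex_in_P[of i] by (simp add: mem_P_ineq)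
      ultimately show ?thesis
        using that vertex_in_Rn[of i]
        by (simp add: mem_P_ineq Rn_def x_def) (smt (verit) mult_nonneg_nonpos)
    qed
    moreover have "(\<lambda>k. vertex i k - x k) \<in> Rn n" using vertex_in_Rn by (simp add: Rn_def x_def)
    ultimately have "(\<lambda>k. vertex i k - x k) = (\<lambda>k. 0)" by (rule P_contains_no_ray[rotated])
    then have "vertex i = x" by (simp add: fun_eq_iff)
    then show ?thesis using row_eq_slack_map Lx by simp
  qed
  then have "rows S = {0}" by (auto simp: rows_eq_range)
  then show False using assms by simp
qed

lemma slack_combination_eq_0_iff:
  assumes "y0 \<in> P"
  shows "(\<Sum>i\<in>A. c i *\<^sub>R (L (y i) - L y0)) = 0 \<longleftrightarrow> (\<forall>k<n. (\<Sum>i\<in>A. c i * (y i k - y0 k)) = 0)"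
proof -
  define d where "d k = (if k < n then (\<Sum>i\<in>A. c i * (y i k - y0 k)) else 0)" for k
  have "(\<Sum>i\<in>A. c i *\<^sub>R (L (y i) - L y0)) $ j = - (\<Sum>k<n. W j k * d k)" for j
    by (simp add: slack_map_diff d_def sum_distrib_left sum_negf[symmetric] mult.left_commute)
      (subst sum.swap, simp)
  then have "(\<Sum>i\<in>A. c i *\<^sub>R (L (y i) - L y0)) = 0 \<longleftrightarrow> (\<forall>j. (\<Sum>k<n. W j k * d k) = 0)"
    by (simp add: vec_eq_iff)
  also have "\<dots> \<longleftrightarrow> d = (\<lambda>k. 0)"
    using assms by (intro slack_map_diff_eq_0_iff) (simp_all add: Rn_def d_def)
  also have "\<dots> \<longleftrightarrow> (\<forall>k<n. (\<Sum>i\<in>A. c i * (y i k - y0 k)) = 0)"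
    by (auto simp: d_def fun_eq_iff)
  finally show ?thesis .
qed

lemma aff_indep_pts_iff:
  assumes "y 0 \<in> P"
  shows "aff_indep_pts n d y \<longleftrightarrow>
    (\<forall>c. (\<Sum>i\<in>{1..d}. c i *\<^sub>R (L (y i) - L (y 0))) = 0 \<longrightarrow> (\<forall>i\<in>{1..d}. c i = 0))"
  unfolding aff_indep_pts_def slack_combination_eq_0_iff[OF assms] ..

lemma aff_indep_pts_exist:
  "\<exists>y. (\<forall>i\<le>nat (aff_dim (rows S)). y i \<in> P) \<and> aff_indep_pts n (nat (aff_dim (rows S))) y"
proof -
  define D where "D = nat (aff_dim (rows S))"
  obtain B where B: "B \<subseteq> rows S" "\<not> affine_dependent B" "int (card B) = aff_dim (rows S) + 1"
    using aff_dim_inner_basis_exists[of "rows S"] by blast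
  then have "card B \<noteq> 0" using aff_dim_rows_nonneg[of S] by linarith
  then obtain b0 where b0: "b0 \<in> B" by fastforce
  define B' where "B' = (\<lambda>x. - b0 + x) ` (B - {b0})"
  have indB': "independent B'"
    using B(2) affine_dependent_iff_dependent2[OF b0] by (simp add: B'_def)
  have "card B' = card (B - {b0})" unfolding B'_def by (rule card_image) (simp add: inj_on_def)
  then have card_B': "card B' = D"
    using B(2,3) b0 aff_independent_finite[of B] by (simp add: D_def)
  obtain v where v: "bij_betw v {1..D} B'"
      "\<And>c. (\<Sum>i\<in>{1..D}. c i *\<^sub>R v i) = 0 \<Longrightarrow> \<forall>i\<in>{1..D}. c i = 0"
    using independent_enumeration[OF indB', of "{1..D}"] card_B' by auto
  define pt where "pt i = (if i = 0 then b0 else b0 + v i)" for i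
  have "pt i \<in> B" if "i \<le> D" for i
  proof (cases "i = 0")
    case False
    then have "v i \<in> B'" using bij_betw_apply[OF v(1)] that by auto
    then show ?thesis using False by (auto simp: pt_def B'_def)
  qed (simp add: pt_def b0)
  then have pt: "pt i \<in> range (\<lambda>i. S $ i)" if "i \<le> D" for i
    using B(1) that unfolding rows_eq_range by blast
  define r where "r i = (SOME r. S $ r = pt i)" for i
  have r: "S $ r i = pt i" if "i \<le> D" for i
    unfolding r_def by (rule someI_ex) (use pt[OF that] in \<open>simp add: image_iff eq_commute\<close>)
  define y where "y i = vertex (r i)" for i
  have diff: "L (y i) - L (y 0) = v i" if "i \<in> {1..D}" for i
    using r[of i] r[of 0] that by (simp add: y_def pt_def flip: row_eq_slack_map)
  have "aff_indep_pts n D y"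
    unfolding aff_indep_pts_iff[of y, OF vertex_in_P[of "r 0", folded y_def]]
  proof (intro allI impI)
    fix c assume "(\<Sum>i\<in>{1..D}. c i *\<^sub>R (L (y i) - L (y 0))) = 0"
    moreover have "(\<Sum>i\<in>{1..D}. c i *\<^sub>R (L (y i) - L (y 0))) = (\<Sum>i\<in>{1..D}. c i *\<^sub>R v i)"
      by (rule sum.cong) (simp_all add: diff)
    ultimately show "\<forall>i\<in>{1..D}. c i = 0" using v(2) by simp
  qed
  moreover have "\<forall>i\<le>D. y i \<in> P" by (simp add: y_def vertex_in_P)
  ultimately show ?thesis unfolding D_def by blast
qed

lemma aff_indep_pts_le:
  assumes y: "\<forall>i\<le>d. y i \<in> P" and indep: "aff_indep_pts n d y"
  shows "d \<le> nat (aff_dim (rows S))"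
proof -
  define a where "a = L (y 0)"
  define u where "u i = L (y i) - a" for i
  have "inj_on u {1..d}" and ind: "independent (u`{1..d})"
    using independent_family[of "{1..d}" u] indep y by (auto simp: aff_indep_pts_iff u_def a_def)
  then have "card (u`{1..d}) = d" by (simp add: card_image)
  have a: "a \<in> affine hull (rows S)"
    using slack_map_in_convex_hull_rows y convex_hull_subset_affine_hull by (auto simp: a_def)
  have "u`{1..d} \<subseteq> span ((\<lambda>x. - a + x) ` rows S)"
  proof
    fix z assume "z \<in> u`{1..d}"
    then obtain i where i: "i \<in> {1..d}" "z = u i" by auto
    have "L (y i) \<in> affine hull (rows S)"
      using slack_map_in_convex_hull_rows y i convex_hull_subset_affine_hull by auto
    then have "L (y i) \<in> affine hull (insert a (rows S))" using hull_redundant[OF a] by simp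
    then show "z \<in> span ((\<lambda>x. - a + x) ` rows S)"
      unfolding affine_hull_insert_span_gen i(2) u_def by auto
  qed
  from independent_card_le_dim[OF this ind] \<open>card (u`{1..d}) = d\<close>
  show ?thesis using aff_dim_eq_dim[OF a] by simp
qed

lemma set_dim_P: "set_dim n P = nat (aff_dim (rows S))"
  unfolding set_dim_def
  by (rule Greatest_equality) (use aff_indep_pts_exist aff_indep_pts_le in auto)

lemma rank_eq_set_dim_plus_1:
  assumes "set_dim n P \<ge> 1"
  shows "rank S = set_dim n P + 1"
proof -
  have "aff_dim (rows S) \<ge> 1" using assms set_dim_P by linarith
  with rank_eq_aff_dim_rows[OF zero_notin_affine_hull_rows[OF this]] show ?thesis
    using set_dim_P by linarith
qed

lemma orthant_slice_rows_if_same_zeros: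
  fixes M :: "real^'q^'p"
  assumes "\<forall>i j. 0 \<le> M $ i $ j" "\<forall>i j. M $ i $ j = 0 \<longleftrightarrow> S $ i $ j = 0"
    and "aff_dim (rows M) \<le> aff_dim (rows S)"
  shows "orthant_slice UNIV (rows M)"
proof -
  have "slice_transfer_hyps UNIV UNIV (\<lambda>i. M $ i) (\<lambda>i. S $ i)"
    using assms slack_nonneg orthant_slice_rows
    by (simp add: slice_transfer_hyps_def nonneg_same_zeros_def rows_eq_range)
  from slice_transfer[OF this] show ?thesis
    by (simp add: slice_transfer_concls_def rows_eq_range)
qed

end

lemma slack_matrix_of_iff:
  "slack_matrix_of n P S \<longleftrightarrow> set_dim n P \<ge> 1 \<and> (\<exists>V W w. P = conv_rows n V \<and> slack_repr n V W w S)"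
  unfolding slack_matrix_of_def slack_repr_def by auto

lemma inc_mat_eq_iff: "inc_mat M = inc_mat S \<longleftrightarrow> (\<forall>i j. M $ i $ j = 0 \<longleftrightarrow> S $ i $ j = 0)"
  by (auto simp: inc_mat_def vec_eq_iff split: if_splits)

lemma is_slack_matrix_if_orthant_slice:
  fixes M :: "real^'q::finite^'p::finite"
  assumes nonneg: "\<forall>i j. 0 \<le> M $ i $ j" and slice: "orthant_slice UNIV (rows M)"
    and dim: "aff_dim (rows M) \<ge> 1"
  shows "is_slack_matrix M"
proof -
  obtain i0 :: 'p where True by blast
  define b0 where "b0 = M $ i0"
  obtain D v where D: "aff_dim (rows M) = int D"
      and aff: "affine hull (rows M) = range (\<lambda>x. b0 + (\<Sum>k<D. x k *\<^sub>R v k))"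
      and v: "\<And>c. (\<Sum>k<D. c k *\<^sub>R v k) = 0 \<Longrightarrow> \<forall>k<D. c k = 0"
    using affine_hull_coordinates[of b0 "rows M"] by (auto simp: b0_def rows_eq_range)
  have "M $ i \<in> affine hull (rows M)" for i by (simp add: hull_inc rows_eq_range)
  then have "\<forall>i. \<exists>c. M $ i = b0 + (\<Sum>k<D. c k *\<^sub>R v k)" unfolding aff by blast
  then obtain cf where cf: "\<And>i. M $ i = b0 + (\<Sum>k<D. cf i k *\<^sub>R v k)"
    by (metis (no_types))
  define V where "V i k = (if k < D then cf i k else 0)" for i k
  define W where "W j k = - (v k $ j)" for j k
  define w where "w j = b0 $ j" for j
  have L: "slack_map D W w x = b0 + (\<Sum>k<D. x k *\<^sub>R v k)" for x
    by (simp add: vec_eq_iff slack_map_def W_def w_def mult.commute sum_negf)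
  have L_V: "slack_map D W w (V i) = M $ i" for i
    using cf[of i] by (simp add: L V_def)
  have L_inj: "x k = x' k" if "slack_map D W w x = slack_map D W w x'" "k < D" for x x' k
  proof -
    have "(\<Sum>k<D. (x k - x' k) *\<^sub>R v k) = 0"
      using that(1) by (simp add: L scaleR_diff_left sum_subtractf)
    from v[OF this] show ?thesis using that(2) by simp
  qed
  have "conv_rows D V = ineq_set D W w"
  proof (intro set_eqI iffI)
    fix x assume "x \<in> conv_rows D V"
    then obtain l :: "'p \<Rightarrow> real" where x: "x \<in> Rn D" "\<forall>i. l i \<ge> 0" "sum l UNIV = 1"
        "\<forall>k<D. x k = (\<Sum>i\<in>UNIV. l i * V i k)"
      by (auto simp: conv_rows_def)
    have "slack_map D W w x = (\<Sum>i\<in>UNIV. l i *\<^sub>R M $ i)"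
      using slack_map_affine_combination[where W=W and w=w, OF x(4) x(3)] by (simp add: L_V)
    then have "0 \<le> slack_map D W w x $ j" for j using x(2) nonneg by (simp add: sum_nonneg)
    then show "x \<in> ineq_set D W w" using x(1) by (simp add: ineq_set_def slack_map_def)
  next
    fix x assume "x \<in> ineq_set D W w"
    then have x: "x \<in> Rn D" "\<forall>j. 0 \<le> slack_map D W w x $ j"
      by (auto simp: ineq_set_def slack_map_def)
    have "slack_map D W w x \<in> affine hull (rows M)" by (simp add: aff L)
    then have "slack_map D W w x \<in> convex hull (rows M)"
      using slice x(2) by (simp add: orthant_slice_def)
    then obtain l where l: "\<forall>i. 0 \<le> l i" "sum l UNIV = 1" "(\<Sum>i\<in>UNIV. l i *\<^sub>R M $ i) = slack_map D W w x"
      unfolding rows_eq_range convex_hull_image_explicit[OF finite_class.finite_UNIV] by auto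
    define x' where "x' k = (\<Sum>i\<in>UNIV. l i * V i k)" for k
    have "slack_map D W w x' = slack_map D W w x"
      using slack_map_affine_combination[where n=D and x=x' and l=l and A=UNIV and y=V and W=W and w=w] l(2,3) by (simp add: x'_def L_V)
    from L_inj[OF this[symmetric]] have "\<forall>k<D. x k = (\<Sum>i\<in>UNIV. l i * V i k)"
      by (simp add: x'_def)
    then show "x \<in> conv_rows D V" using x(1) l(1,2) unfolding conv_rows_def by blast
  qed
  moreover have "\<forall>i j. M $ i $ j = w j - (\<Sum>k<D. W j k * V i k)"
    using L_V by (simp add: vec_eq_iff slack_map_def)
  ultimately interpret slack_repr D V W w M by unfold_locales
  have "set_dim D (conv_rows D V) \<ge> 1" using set_dim_P D dim by simp
  then have "slack_matrix_of D (conv_rows D V) M"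
    unfolding slack_matrix_of_iff using slack_repr_axioms by blast
  then show ?thesis unfolding is_slack_matrix_def by blast
qed

theorem theorem4p1:
  fixes M :: "real^'q^'p"
  assumes "\<forall>i j. M $ i $ j \<ge> 0"
    and "rank M \<ge> 2"
  shows "is_slack_matrix M \<longleftrightarrow>
           (is_incidence_matrix_dim (rank M - 1) (inc_mat M) \<and>
            ((\<chi> i. 1) :: real^'p) \<in> span (columns M))"
proof
  assume "is_slack_matrix M"
  then obtain n V W w where dim: "set_dim n (conv_rows n V) \<ge> 1" and repr: "slack_repr n V W w M"
    unfolding is_slack_matrix_def slack_matrix_of_iff by blast
  interpret slack_repr n V W w M by (fact repr)
  have "is_incidence_matrix_dim (rank M - 1) (inc_mat M)"
    unfolding is_incidence_matrix_dim_def slack_matrix_of_iff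
    using dim repr rank_eq_set_dim_plus_1[OF dim] by force
  moreover have "0 \<notin> affine hull (rows M)"
    by (rule zero_notin_affine_hull_rows) (use dim set_dim_P in linarith)
  ultimately show "is_incidence_matrix_dim (rank M - 1) (inc_mat M) \<and> (\<chi> i. 1) \<in> span (columns M)"
    by (simp add: ones_in_column_span_iff)
next
  assume "is_incidence_matrix_dim (rank M - 1) (inc_mat M) \<and> (\<chi> i. 1) \<in> span (columns M)"
  then obtain n V W w S where dim_S: "set_dim n (conv_rows n V) = rank M - 1"
      and repr: "slack_repr n V W w S" and inc: "inc_mat M = inc_mat S"
      and zero: "0 \<notin> affine hull (rows M)"
    unfolding is_incidence_matrix_dim_def slack_matrix_of_iff ones_in_column_span_iff by blast
  interpret slack_repr n V W w S by (fact repr)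
  have dim_M: "aff_dim (rows M) = int (rank M) - 1"
    using rank_eq_aff_dim_rows[OF zero] by linarith
  then have "aff_dim (rows M) \<le> aff_dim (rows S)"
    using aff_dim_rows_nonneg[of S] dim_S set_dim_P assms(2) by linarith
  then have "orthant_slice UNIV (rows M)"
    using orthant_slice_rows_if_same_zeros assms(1) inc by (simp add: inc_mat_eq_iff)
  then show "is_slack_matrix M"
    by (rule is_slack_matrix_if_orthant_slice[OF assms(1)]) (use dim_M assms(2) in linarith)
qed

end
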